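(* Let $x\in\operatorname{dom}f$ and let $0<\varepsilon_t\le1$, $t\in T$, be such that $\inf_{t\in T}\varepsilon_tf_t(x)>-\infty$. Then for every $\varepsilon>0$, \[ \Big[\overline{\operatorname{co}}\Big(\bigcup_{t\in T}\partial_\varepsilon(\varepsilon_tf_t)(x)\Big)\Big]_\infty\subset \mathrm{N}_{\operatorname{dom}f}(x), \] and if in addition the standard hypothesis (SH) holds, then \[ \mathrm{N}_{\operatorname{dom}f}(x)=\Big[\overline{\operatorname{co}}\Big(\bigcup_{t\in T}\partial_\varepsilon(\varepsilon_tf_t)(x)\Big)\Big]_\infty . \]
   Context: $X$ is a real separated locally convex space with dual $X^*$ carrying the weak$^*$ topology (closures in $X^*$ are weak$^*$). $\Gamma_0(X)$ is the set of proper convex lsc functions $X\to\mathbb{R}\cup\{+\infty\}$. $T$ is a nonempty index set, $\{f_t: t\in T\}\subset\Gamma_0(X)$ and $f:=\sup_{t\in T}f_t$. For $g:X\to\overline{\mathbb{R}}$, $\partial_\varepsilon g(x)=\{x^*\in X^*:\ g(y)\ge g(x)+\langle x^*,y-x\rangle-\varepsilon\ \forall y\}$ if $g(x)\in\mathbb{R}$, $\varepsilon\ge0$ (empty otherwise). $\overline{\operatorname{co}}$ is the weak$^*$-closed convex hull; for a nonempty closed convex set $C$, $C_\infty:=\{y: z+\lambda y\in C$ for some $z\in C$ and all $\lambda\ge0\}$. The normal cone is $\mathrm{N}_A(x)=\{x^*:\langle x^*,y-x\rangle\le0\ \forall y\in A\}$ for $x\in A$. Standard hypothesis (SH): $T$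 is a compact Hausdorff topological space and for every $z\in X$ the map $t\mapsto f_t(z)$ is upper semicontinuous on $T$. *)

theory Defs
  imports "HOL-Analysis.Analysis"
begin

definition lcs :: "'a::real_vector topology \<Rightarrow> bool" where
  "lcs \<tau> \<longleftrightarrow> topspace \<tau> = UNIV \<and> Hausdorff_space \<tau>
     \<and> continuous_map (prod_topology \<tau> \<tau>) \<tau> (\<lambda>(x, y). x + y)
     \<and> continuous_map (prod_topology euclideanreal \<tau>) \<tau> (\<lambda>(a, x). a *\<^sub>R x)
     \<and> (\<forall>U. openin \<tau> U \<and> 0 \<in> U \<longrightarrow> (\<exists>V. openin \<tau> V \<and> convex V \<and> 0 \<in> V \<and> V \<subseteq> U))"

definition dual :: "'a::real_vector topology \<Rightarrow> ('a \<Rightarrow> real) set" where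
  "dual \<tau> = {\<phi>. linear \<phi> \<and> continuous_map \<tau> euclideanreal \<phi>}"

definition wstar :: "'a::real_vector topology \<Rightarrow> ('a \<Rightarrow> real) topology" where
  "wstar \<tau> = subtopology (product_topology (\<lambda>_. euclideanreal) UNIV) (dual \<tau>)"

definition convex_fun :: "('a \<Rightarrow> real) set \<Rightarrow> bool" where
  "convex_fun C \<longleftrightarrow> (\<forall>\<phi>\<in>C. \<forall>\<psi>\<in>C. \<forall>u::real. 0 \<le> u \<and> u \<le> 1 \<longrightarrow>
      (\<lambda>y. u * \<phi> y + (1 - u) * \<psi> y) \<in> C)"

definition wclco :: "'a::real_vector topology \<Rightarrow> ('a \<Rightarrow> real) set \<Rightarrow> ('a \<Rightarrow> real) set" where
  "wclco \<tau> S = \<Inter>{C. S \<subseteq> C \<and> convex_fun C \<and> closedin (wstar \<tau>) C}"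

definition rec_cone :: "('a \<Rightarrow> real) set \<Rightarrow> ('a \<Rightarrow> real) set" where
  "rec_cone C = {y. \<exists>z\<in>C. \<forall>r::real. r \<ge> 0 \<longrightarrow> (\<lambda>v. z v + r * y v) \<in> C}"

definition Gamma0 :: "'a::real_vector topology \<Rightarrow> ('a \<Rightarrow> ereal) set" where
  "Gamma0 \<tau> = {g. (\<forall>x. g x \<noteq> -\<infinity>) \<and> (\<exists>x. g x \<noteq> \<infinity>)
     \<and> (\<forall>x y. \<forall>u::real. 0 \<le> u \<and> u \<le> 1 \<longrightarrow>
          g (u *\<^sub>R x + (1 - u) *\<^sub>R y) \<le> ereal u * g x + ereal (1 - u) * g y)
     \<and> (\<forall>c::real. closedin \<tau> {x. g x \<le> ereal c})}"

definition edom :: "('a \<Rightarrow> ereal) \<Rightarrow> 'a set" where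
  "edom g = {x. g x < \<infinity>}"

definition eps_subdiff :: "'a::real_vector topology \<Rightarrow> real \<Rightarrow> ('a \<Rightarrow> ereal) \<Rightarrow> 'a \<Rightarrow> ('a \<Rightarrow> real) set" where
  "eps_subdiff \<tau> \<epsilon> g x = (if g x \<in> {-\<infinity>, \<infinity>} then {} else
     {\<phi> \<in> dual \<tau>. \<forall>y. g y \<ge> g x + ereal (\<phi> (y - x)) - ereal \<epsilon>})"

definition normal_cone :: "'a::real_vector topology \<Rightarrow> 'a set \<Rightarrow> 'a \<Rightarrow> ('a \<Rightarrow> real) set" where
  "normal_cone \<tau> A x = {\<phi> \<in> dual \<tau>. \<forall>y\<in>A. \<phi> (y - x) \<le> 0}"

definition SH :: "'b topology \<Rightarrow> 'b set \<Rightarrow> ('b \<Rightarrow> 'a \<Rightarrow> ereal) \<Rightarrow> bool" where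
  "SH TT T F \<longleftrightarrow> topspace TT = T \<and> compact_space TT \<and> Hausdorff_space TT
     \<and> (\<forall>z. \<forall>c::real. openin TT {t \<in> T. F t z < ereal c})"

end

(*
  Recession cone inside the normal cone: for d in dom f, every eps-subgradient of
  e_t f_t at x is bounded on d - x by max 0 (f d) - (inf_t e_t f_t x) + eps, uniformly in t.
  The weak*-closed half-space this defines contains the closed convex hull C of the
  union, so every recession direction y of C has y (d - x) <= 0.

  Reverse inclusion under (SH): C contains every continuous linear functional below the
  support function sigma of the union (weak* separation, obtained from Hahn-Banach).
  If sigma u is finite, no f_t is +infinity on the whole open ray x + s u, since
  otherwise separating chords from the epigraph would give eps-subgradients with
  arbitrarily large values at u; compactness of T and upper semicontinuity in t then give
  a common s with x + s u in dom f. So a normal vector y has y u <= 0 wherever sigma u is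
  finite, and phi0 + r y stays below sigma for every phi0 in the union and r >= 0.
*)
theory Submission
  imports Defs "HOL-Library.Function_Algebras"
begin

section \<open>Hahn--Banach via minimal sublinear functionals\<close>

definition sublinear :: "('v::real_vector \<Rightarrow> real) \<Rightarrow> bool" where
  "sublinear q \<longleftrightarrow> (\<forall>x y. q (x + y) \<le> q x + q y) \<and> (\<forall>c x. 0 \<le> c \<longrightarrow> q (c *\<^sub>R x) = c * q x)"

lemma sublinear_add: "sublinear q \<Longrightarrow> q (x + y) \<le> q x + q y"
  unfolding sublinear_def by blast

lemma sublinear_scale: "sublinear q \<Longrightarrow> 0 \<le> c \<Longrightarrow> q (c *\<^sub>R x) = c * q x"
  unfolding sublinear_def by blast

lemma sublinear_zero: "sublinear q \<Longrightarrow> q 0 = 0"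
  using sublinear_scale[of q 0 0] by simp

lemma sublinear_neg_le: "sublinear q \<Longrightarrow> - q (- x) \<le> q x"
  using sublinear_add[of q x "- x"] sublinear_zero[of q] by simp

lemma sublinearI:
  assumes add: "\<And>x y. q (x + y) \<le> q x + q y"
    and scale: "\<And>c x. 0 < c \<Longrightarrow> q (c *\<^sub>R x) \<le> c * q x"
    and zero: "q 0 = 0"
  shows "sublinear q"
proof -
  have "q (c *\<^sub>R x) = c * q x" if "0 \<le> c" for c x
  proof (cases "c = 0")
    case False
    with that have c: "0 < c" by simp
    have "q x \<le> (1 / c) * q (c *\<^sub>R x)"
      using scale[of "1 / c" "c *\<^sub>R x"] c by simp
    then have "c * q x \<le> q (c *\<^sub>R x)"
      using c by (simp add: field_simps)
    then show ?thesis
      using scale[OF c, of x] by simp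
  qed (simp add: zero)
  then show ?thesis
    unfolding sublinear_def using add by blast
qed

text \<open>A minimal sublinear \<open>m\<close> equals its reduction along every \<open>a\<close>, which forces
  \<open>m (- a) = - m a\<close>; this is how minimality yields linearity.\<close>
definition sublinear_reduce :: "('v::real_vector \<Rightarrow> real) \<Rightarrow> 'v \<Rightarrow> 'v \<Rightarrow> real" where
  "sublinear_reduce q a x = (INF t\<in>{0..}. q (x + t *\<^sub>R a) - t * q a)"

lemma sublinear_reduce_le:
  assumes q: "sublinear q" and t: "0 \<le> t"
  shows "sublinear_reduce q a x \<le> q (x + t *\<^sub>R a) - t * q a"
proof -
  have "- q (- x) \<le> q (x + s *\<^sub>R a) - s * q a" if "0 \<le> s" for s
    using sublinear_add[OF q, of "x + s *\<^sub>R a" "- x"] sublinear_scale[OF q that, of a] by simp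
  then have "bdd_below ((\<lambda>s. q (x + s *\<^sub>R a) - s * q a) ` {0..})"
    unfolding bdd_below_def by fastforce
  then show ?thesis
    unfolding sublinear_reduce_def using t by (intro cInf_lower) auto
qed

lemma sublinear_reduce_greatest:
  "(\<And>t. 0 \<le> t \<Longrightarrow> L \<le> q (x + t *\<^sub>R a) - t * q a) \<Longrightarrow> L \<le> sublinear_reduce q a x"
  unfolding sublinear_reduce_def by (rule cInf_greatest) auto

lemma sublinear_reduce_le_self: "sublinear q \<Longrightarrow> sublinear_reduce q a x \<le> q x"
  using sublinear_reduce_le[of q 0 a x] by simp

lemma sublinear_reduce_neg: "sublinear q \<Longrightarrow> sublinear_reduce q a (- a) \<le> - q a"
  using sublinear_reduce_le[of q 1 a "- a"] sublinear_zero[of q] by simp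

lemma sublinear_reduce_add:
  assumes q: "sublinear q"
  shows "sublinear_reduce q a (x + y) \<le> sublinear_reduce q a x + sublinear_reduce q a y"
proof -
  let ?r = "sublinear_reduce q a"
  have sum: "?r (x + y) \<le> (q (x + s *\<^sub>R a) - s * q a) + (q (y + t *\<^sub>R a) - t * q a)"
    if "0 \<le> s" "0 \<le> t" for s t
  proof -
    have "?r (x + y) \<le> q (x + y + (s + t) *\<^sub>R a) - (s + t) * q a"
      using sublinear_reduce_le[OF q, of "s + t"] that by simp
    also have "q (x + y + (s + t) *\<^sub>R a) \<le> q (x + s *\<^sub>R a) + q (y + t *\<^sub>R a)"
      using sublinear_add[OF q, of "x + s *\<^sub>R a" "y + t *\<^sub>R a"]
      by (simp add: algebra_simps scaleR_add_left)
    finally show ?thesis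
      by (simp add: algebra_simps)
  qed
  have "?r (x + y) - (q (y + t *\<^sub>R a) - t * q a) \<le> ?r x" if "0 \<le> t" for t
    by (rule sublinear_reduce_greatest) (use sum that in fastforce)
  then have "?r (x + y) - ?r x \<le> ?r y"
    by (intro sublinear_reduce_greatest) fastforce
  then show ?thesis
    by simp
qed

lemma sublinear_reduce_scale:
  assumes q: "sublinear q" and c: "0 < c"
  shows "sublinear_reduce q a (c *\<^sub>R x) \<le> c * sublinear_reduce q a x"
proof -
  let ?r = "sublinear_reduce q a"
  have "?r (c *\<^sub>R x) / c \<le> ?r x"
  proof (rule sublinear_reduce_greatest)
    fix t :: real
    assume "0 \<le> t"
    then have "?r (c *\<^sub>R x) \<le> q (c *\<^sub>R x + (c * t) *\<^sub>R a) - (c * t) * q a"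
      using sublinear_reduce_le[OF q, of "c * t"] c by simp
    also have "q (c *\<^sub>R x + (c * t) *\<^sub>R a) = c * q (x + t *\<^sub>R a)"
      using sublinear_scale[OF q, of c "x + t *\<^sub>R a"] c by (simp add: scaleR_add_right)
    finally show "?r (c *\<^sub>R x) / c \<le> q (x + t *\<^sub>R a) - t * q a"
      using c by (simp add: divide_simps algebra_simps)
  qed
  then show ?thesis
    using c by (simp add: divide_simps mult.commute)
qed

lemma sublinear_sublinear_reduce:
  assumes q: "sublinear q"
  shows "sublinear (sublinear_reduce q a)"
proof (rule sublinearI[OF sublinear_reduce_add[OF q] sublinear_reduce_scale[OF q]])
  show "sublinear_reduce q a 0 = 0"
  proof (rule antisym)
    show "sublinear_reduce q a 0 \<le> 0"
      using sublinear_reduce_le_self[OF q, of a 0] sublinear_zero[OF q] by simp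
    show "0 \<le> sublinear_reduce q a 0"
      by (rule sublinear_reduce_greatest) (simp add: sublinear_scale[OF q])
  qed
qed

lemma bdd_below_sublinear_family:
  assumes "\<And>q. q \<in> C \<Longrightarrow> sublinear q \<and> (\<forall>x. q x \<le> p x)"
  shows "bdd_below ((\<lambda>q. q x) ` C)"
proof (rule bdd_belowI2)
  fix q
  assume "q \<in> C"
  then have "q (- x) \<le> p (- x)" "- q (- x) \<le> q x"
    using assms sublinear_neg_le[of q x] by auto
  then show "- p (- x) \<le> q x"
    by linarith
qed

lemma sublinear_INF_chain:
  assumes C: "C \<noteq> {}" "\<And>q. q \<in> C \<Longrightarrow> sublinear q \<and> (\<forall>x. q x \<le> p x)"
    and chain: "\<And>q1 q2. q1 \<in> C \<Longrightarrow> q2 \<in> C \<Longrightarrow> (\<forall>x. q1 x \<le> q2 x) \<or> (\<forall>x. q2 x \<le> q1 x)"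
  shows "sublinear (\<lambda>x. INF q\<in>C. q x)"
proof -
  define u where "u x = (INF q\<in>C. q x)" for x
  have lower: "u x \<le> q x" if "q \<in> C" for q x
    unfolding u_def using that bdd_below_sublinear_family[OF C(2)] by (intro cInf_lower) auto
  have greatest: "L \<le> u x" if "\<And>q. q \<in> C \<Longrightarrow> L \<le> q x" for L x
    unfolding u_def using that C(1) by (intro cInf_greatest) auto
  have sub: "sublinear q" if "q \<in> C" for q
    using C(2)[OF that] by blast
  have "sublinear u"
  proof (rule sublinearI)
    fix x y
    have "u (x + y) \<le> q1 x + q2 y" if "q1 \<in> C" "q2 \<in> C" for q1 q2
    proof -
      from chain[OF that] have "\<exists>q\<in>C. q x \<le> q1 x \<and> q y \<le> q2 y"
      proof
        assume "\<forall>x. q1 x \<le> q2 x"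
        then show ?thesis
          using that(1) by auto
      next
        assume "\<forall>x. q2 x \<le> q1 x"
        then show ?thesis
          using that(2) by auto
      qed
      then obtain q where q: "q \<in> C" "q x \<le> q1 x" "q y \<le> q2 y"
        by blast
      have "u (x + y) \<le> q x + q y"
        using lower[OF q(1)] sublinear_add[OF sub[OF q(1)]] order_trans by blast
      with q show ?thesis
        by simp
    qed
    then have "u (x + y) - q2 y \<le> u x" if "q2 \<in> C" for q2
      using that by (intro greatest) (simp add: algebra_simps)
    then have "u (x + y) - u x \<le> u y"
      by (intro greatest) (simp add: algebra_simps)
    then show "u (x + y) \<le> u x + u y"
      by simp
  next
    fix c :: real and x
    assume c: "0 < c"
    have "u (c *\<^sub>R x) / c \<le> u x"
      by (rule greatest) (use c lower sublinear_scale[OF sub] in \<open>fastforce simp: divide_simps mult.commute\<close>)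
    then show "u (c *\<^sub>R x) \<le> c * u x"
      using c by (simp add: field_simps)
  next
    obtain q where "q \<in> C"
      using C(1) by blast
    then show "u 0 = 0"
      using lower[of q 0] greatest[of 0 0] sublinear_zero[OF sub] by force
  qed
  then show ?thesis
    unfolding u_def .
qed

lemma minimal_sublinear_below:
  assumes p: "sublinear p"
  obtains m where "sublinear m" "\<And>x. m x \<le> p x"
    "\<And>q. sublinear q \<Longrightarrow> (\<And>x. q x \<le> m x) \<Longrightarrow> q = m"
proof -
  define A where "A = {q. sublinear q \<and> (\<forall>x. q x \<le> p x)}"
  define below where "below q1 q2 \<longleftrightarrow> (\<forall>x. q2 x \<le> q1 x)" for q1 q2 :: "'a \<Rightarrow> real"
  have po: "partial_order_on A (relation_of below A)"
    unfolding partial_order_on_def preorder_on_def refl_on_def trans_def antisym_def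
      relation_of_def below_def
    by (auto intro!: ext intro: order_trans antisym)
  have "\<exists>u\<in>A. \<forall>q\<in>C. below q u" if C: "C \<in> Chains (relation_of below A)" for C
  proof (cases "C = {}")
    case True
    then show ?thesis
      using p unfolding A_def by auto
  next
    case False
    have CA: "C \<subseteq> A"
      using Chains_relation_of[OF C] .
    have chain: "(\<forall>x. q1 x \<le> q2 x) \<or> (\<forall>x. q2 x \<le> q1 x)" if "q1 \<in> C" "q2 \<in> C" for q1 q2
      using C that unfolding Chains_def relation_of_def below_def by blast
    have "sublinear (\<lambda>x. INF q\<in>C. q x)"
      using False CA chain by (intro sublinear_INF_chain[of C p]) (auto simp: A_def)
    moreover have lower: "(INF q\<in>C. q x) \<le> q x" if "q \<in> C" for q x
      using that CA by (intro cInf_lower bdd_below_sublinear_family[of C p]) (auto simp: A_def)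
    moreover have "(INF q\<in>C. q x) \<le> p x" for x
    proof -
      obtain q0 where "q0 \<in> C"
        using False by blast
      then have "(INF q\<in>C. q x) \<le> q0 x" "q0 x \<le> p x"
        using lower[of q0 x] CA unfolding A_def by auto
      then show ?thesis
        by linarith
    qed
    ultimately show ?thesis
      unfolding A_def below_def by (intro bexI[of _ "\<lambda>x. INF q\<in>C. q x"]) auto
  qed
  then obtain m where m: "m \<in> A" "\<forall>q\<in>A. below m q \<longrightarrow> q = m"
    using predicate_Zorn[OF po] by blast
  show ?thesis
  proof (rule that)
    show "sublinear m" "\<And>x. m x \<le> p x"
      using m(1) unfolding A_def by auto
    fix q
    assume "sublinear q" "\<And>x. q x \<le> m x"
    moreover from this have "q \<in> A"
      using m(1) unfolding A_def by (fastforce intro: order_trans)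
    ultimately show "q = m"
      using m(2) unfolding below_def by blast
  qed
qed

lemma minimal_sublinear_linear:
  assumes m: "sublinear m" and minimal: "\<And>q. sublinear q \<Longrightarrow> (\<And>x. q x \<le> m x) \<Longrightarrow> q = m"
  shows "linear m"
proof -
  have neg: "m (- a) = - m a" for a
  proof -
    have "sublinear_reduce m a = m"
      using minimal sublinear_sublinear_reduce[OF m] sublinear_reduce_le_self[OF m] by blast
    then have "m (- a) \<le> - m a"
      using sublinear_reduce_neg[OF m, of a] by simp
    then show ?thesis
      using sublinear_neg_le[OF m, of a] by simp
  qed
  have "m (x + y) = m x + m y" for x y
    using sublinear_add[OF m, of "x + y" "- y"] sublinear_add[OF m, of x y] neg[of y] by simp
  moreover have "m (c *\<^sub>R x) = c * m x" for c x
  proof (cases "0 \<le> c")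
    case False
    then have "m ((- c) *\<^sub>R (- x)) = (- c) * m (- x)"
      by (intro sublinear_scale[OF m]) simp
    then show ?thesis
      using neg[of x] by simp
  qed (simp add: sublinear_scale[OF m])
  ultimately show ?thesis
    by (intro linearI) auto
qed

theorem hahn_banach:
  assumes p: "sublinear p"
  obtains L where "linear L" "\<And>x. L x \<le> p x" "L x0 = p x0"
proof -
  obtain m where m: "sublinear m" "\<And>x. m x \<le> sublinear_reduce p x0 x"
    "\<And>q. sublinear q \<Longrightarrow> (\<And>x. q x \<le> m x) \<Longrightarrow> q = m"
    using minimal_sublinear_below[OF sublinear_sublinear_reduce[OF p]] by blast
  have lin: "linear m"
    using minimal_sublinear_linear[OF m(1,3)] by blast
  have below: "m x \<le> p x" for x
    using m(2) sublinear_reduce_le_self[OF p] order_trans by blast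
  have "m (- x0) \<le> - p x0"
    using m(2) sublinear_reduce_neg[OF p, of x0] order_trans by blast
  then have "p x0 \<le> m x0"
    using linear_neg[OF lin, of x0] by simp
  then show ?thesis
    using that[OF lin below] below[of x0] by simp
qed

section \<open>Locally convex vector topologies\<close>

definition locally_convex :: "'v::real_vector topology \<Rightarrow> bool" where
  "locally_convex \<sigma> \<longleftrightarrow> topspace \<sigma> = UNIV
     \<and> continuous_map (prod_topology \<sigma> \<sigma>) \<sigma> (\<lambda>(x, y). x + y)
     \<and> continuous_map (prod_topology euclideanreal \<sigma>) \<sigma> (\<lambda>(a, x). a *\<^sub>R x)
     \<and> (\<forall>U. openin \<sigma> U \<and> 0 \<in> U \<longrightarrow> (\<exists>V. openin \<sigma> V \<and> convex V \<and> 0 \<in> V \<and> V \<subseteq> U))"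

lemma lcs_imp_locally_convex: "lcs \<tau> \<Longrightarrow> locally_convex \<tau>"
  unfolding lcs_def locally_convex_def by blast

context
  fixes \<sigma> :: "'v::real_vector topology"
  assumes lc: "locally_convex \<sigma>"
begin

lemma locally_convex_topspace: "topspace \<sigma> = UNIV"
  using lc unfolding locally_convex_def by blast

lemma locally_convex_convex_nbhd:
  "openin \<sigma> U \<Longrightarrow> 0 \<in> U \<Longrightarrow> \<exists>V. openin \<sigma> V \<and> convex V \<and> 0 \<in> V \<and> V \<subseteq> U"
  using lc unfolding locally_convex_def by blast

lemma locally_convex_continuous_add:
  assumes "continuous_map X \<sigma> f" "continuous_map X \<sigma> g"
  shows "continuous_map X \<sigma> (\<lambda>x. f x + g x)"
proof -
  have "continuous_map X (prod_topology \<sigma> \<sigma>) (\<lambda>x. (f x, g x))"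
    using assms by (simp add: continuous_map_pairwise o_def)
  moreover have "continuous_map (prod_topology \<sigma> \<sigma>) \<sigma> (\<lambda>(x, y). x + y)"
    using lc unfolding locally_convex_def by blast
  ultimately show ?thesis
    using continuous_map_compose by (fastforce simp: o_def)
qed

lemma locally_convex_continuous_scaleR:
  assumes "continuous_map X euclideanreal f" "continuous_map X \<sigma> g"
  shows "continuous_map X \<sigma> (\<lambda>x. f x *\<^sub>R g x)"
proof -
  have "continuous_map X (prod_topology euclideanreal \<sigma>) (\<lambda>x. (f x, g x))"
    using assms by (simp add: continuous_map_pairwise o_def)
  moreover have "continuous_map (prod_topology euclideanreal \<sigma>) \<sigma> (\<lambda>(a, x). a *\<^sub>R x)"
    using lc unfolding locally_convex_def by blast
  ultimately show ?thesis
    using continuous_map_compose by (fastforce simp: o_def)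
qed

lemma locally_convex_continuous_affine: "continuous_map \<sigma> \<sigma> (\<lambda>v. a + c *\<^sub>R v)"
proof (rule locally_convex_continuous_add)
  show "continuous_map \<sigma> \<sigma> (\<lambda>v. a)"
    by (simp add: locally_convex_topspace)
  show "continuous_map \<sigma> \<sigma> (\<lambda>v. c *\<^sub>R v)"
    by (rule locally_convex_continuous_scaleR) (simp_all add: continuous_map_id[unfolded id_def])
qed

lemma locally_convex_continuous_line: "continuous_map euclideanreal \<sigma> (\<lambda>t. a + t *\<^sub>R b)"
proof (rule locally_convex_continuous_add)
  show "continuous_map euclideanreal \<sigma> (\<lambda>t. a)"
    by (simp add: locally_convex_topspace)
  show "continuous_map euclideanreal \<sigma> (\<lambda>t. t *\<^sub>R b)"
    by (rule locally_convex_continuous_scaleR) (simp_all add: locally_convex_topspace)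
qed

lemma locally_convex_openin_affine_preimage:
  "openin \<sigma> U \<Longrightarrow> openin \<sigma> {v. a + c *\<^sub>R v \<in> U}"
  using openin_continuous_map_preimage[OF locally_convex_continuous_affine]
  by (simp add: locally_convex_topspace)

lemma locally_convex_openin_affine_image:
  assumes U: "openin \<sigma> U" and c: "c \<noteq> 0"
  shows "openin \<sigma> ((\<lambda>v. a + c *\<^sub>R v) ` U)"
proof -
  have eq: "(\<lambda>v. a + c *\<^sub>R v) ` U = {v. (- (1 / c) *\<^sub>R a) + (1 / c) *\<^sub>R v \<in> U}"
  proof (intro set_eqI iffI)
    fix v
    assume "v \<in> (\<lambda>v. a + c *\<^sub>R v) ` U"
    then show "v \<in> {v. (- (1 / c) *\<^sub>R a) + (1 / c) *\<^sub>R v \<in> U}"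
      using c by (auto simp: algebra_simps)
  next
    fix v
    assume "v \<in> {v. (- (1 / c) *\<^sub>R a) + (1 / c) *\<^sub>R v \<in> U}"
    moreover have "v = a + c *\<^sub>R ((- (1 / c) *\<^sub>R a) + (1 / c) *\<^sub>R v)"
      using c by (simp add: algebra_simps)
    ultimately show "v \<in> (\<lambda>v. a + c *\<^sub>R v) ` U"
      by blast
  qed
  show ?thesis
    unfolding eq by (rule locally_convex_openin_affine_preimage[OF U])
qed

lemma locally_convex_openin_scaled_sums:
  assumes "openin \<sigma> A" "c \<noteq> 0"
  shows "openin \<sigma> ((\<lambda>(a, b). c *\<^sub>R a + b) ` (A \<times> B))"
proof -
  have eq: "(\<lambda>(a, b). c *\<^sub>R a + b) ` (A \<times> B) = (\<Union>b\<in>B. (\<lambda>v. b + c *\<^sub>R v) ` A)"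
    by (auto simp: add.commute)
  show ?thesis
    unfolding eq by (intro openin_Union) (use locally_convex_openin_affine_image[OF assms] in blast)
qed

lemma locally_convex_line_open:
  assumes U: "openin \<sigma> U" and "a + t0 *\<^sub>R b \<in> U"
  obtains \<delta> where "0 < \<delta>" "\<And>t. \<bar>t - t0\<bar> < \<delta> \<Longrightarrow> a + t *\<^sub>R b \<in> U"
proof -
  have "openin euclideanreal {t \<in> topspace euclideanreal. a + t *\<^sub>R b \<in> U}"
    by (rule openin_continuous_map_preimage[OF locally_convex_continuous_line U])
  then have "open {t. a + t *\<^sub>R b \<in> U}"
    by simp
  then obtain \<delta> where \<delta>: "0 < \<delta>" "ball t0 \<delta> \<subseteq> {t. a + t *\<^sub>R b \<in> U}"
    using assms(2) open_contains_ball by blast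
  have "a + t *\<^sub>R b \<in> U" if "\<bar>t - t0\<bar> < \<delta>" for t
  proof -
    have "t \<in> ball t0 \<delta>"
      using that by (simp add: dist_real_def abs_minus_commute)
    then show ?thesis
      using \<delta>(2) by blast
  qed
  with \<delta>(1) show ?thesis
    using that by blast
qed

lemma locally_convex_absorbing:
  assumes "openin \<sigma> U" "0 \<in> U"
  obtains \<delta> where "0 < \<delta>" "\<And>t. \<bar>t\<bar> < \<delta> \<Longrightarrow> t *\<^sub>R x \<in> U"
proof -
  have "0 + 0 *\<^sub>R x \<in> U"
    using assms(2) by simp
  then obtain \<delta> where "0 < \<delta>" "\<And>t. \<bar>t - 0\<bar> < \<delta> \<Longrightarrow> 0 + t *\<^sub>R x \<in> U"
    using locally_convex_line_open[OF assms(1)] by blast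
  then show ?thesis
    using that by simp
qed

lemma locally_convex_half_nbhd:
  assumes "openin \<sigma> N" "0 \<in> N"
  obtains M where "openin \<sigma> M" "convex M" "0 \<in> M" "\<And>a b. a \<in> M \<Longrightarrow> b \<in> M \<Longrightarrow> a + b \<in> N"
proof -
  define P where "P = {z \<in> topspace (prod_topology \<sigma> \<sigma>). (\<lambda>(x, y). x + y) z \<in> N}"
  have "continuous_map (prod_topology \<sigma> \<sigma>) \<sigma> (\<lambda>(x, y). x + y)"
    using lc unfolding locally_convex_def by blast
  then have "openin (prod_topology \<sigma> \<sigma>) P"
    unfolding P_def using assms(1) by (rule openin_continuous_map_preimage)
  moreover have "(0, 0) \<in> P"
    unfolding P_def using assms(2) by (simp add: locally_convex_topspace)
  ultimately obtain W1 W2 where W: "openin \<sigma> W1" "openin \<sigma> W2" "0 \<in> W1" "0 \<in> W2" "W1 \<times> W2 \<subseteq> P"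
    unfolding openin_prod_topology_alt by meson
  then obtain M where M: "openin \<sigma> M" "convex M" "0 \<in> M" "M \<subseteq> W1 \<inter> W2"
    using locally_convex_convex_nbhd[of "W1 \<inter> W2"] by (meson openin_Int IntI)
  moreover have "a + b \<in> N" if "a \<in> M" "b \<in> M" for a b
  proof -
    have "(a, b) \<in> P"
      using W(5) M(4) that by blast
    then show ?thesis
      unfolding P_def by simp
  qed
  ultimately show ?thesis
    using that by blast
qed

end

section \<open>Separation of convex sets\<close>

lemma linear_continuous_map_if_bounded_nbhd:
  assumes lc: "locally_convex \<sigma>" and L: "linear L"
    and V: "openin \<sigma> V" "0 \<in> V" and bounded: "\<And>v. v \<in> V \<Longrightarrow> \<bar>L v\<bar> < 1"
  shows "continuous_map \<sigma> euclideanreal L"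
  unfolding continuous_map_def
proof (intro conjI allI impI)
  show "L \<in> topspace \<sigma> \<rightarrow> topspace euclideanreal"
    by simp
  fix W
  assume "openin euclideanreal W"
  then have W: "open W"
    by simp
  show "openin \<sigma> {x \<in> topspace \<sigma>. L x \<in> W}"
  proof (subst openin_subopen, intro ballI)
    fix x0
    assume x0: "x0 \<in> {x \<in> topspace \<sigma>. L x \<in> W}"
    then obtain d where d: "0 < d" "ball (L x0) d \<subseteq> W"
      using W open_contains_ball by blast
    define N where "N = (\<lambda>v. x0 + d *\<^sub>R v) ` V"
    have "openin \<sigma> N"
      unfolding N_def using locally_convex_openin_affine_image[OF lc V(1)] d by simp
    moreover have "x0 \<in> N"
      unfolding N_def using V(2) by force
    moreover have "N \<subseteq> {x \<in> topspace \<sigma>. L x \<in> W}"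
    proof
      fix y
      assume "y \<in> N"
      then obtain v where v: "v \<in> V" "y = x0 + d *\<^sub>R v"
        unfolding N_def by blast
      then have "dist (L x0) (L y) < d"
        using bounded[OF v(1)] d L by (simp add: linear_add linear_scale dist_real_def abs_mult)
      then show "y \<in> {x \<in> topspace \<sigma>. L x \<in> W}"
        using d locally_convex_topspace[OF lc] by auto
    qed
    ultimately show "\<exists>T. openin \<sigma> T \<and> x0 \<in> T \<and> T \<subseteq> {x \<in> topspace \<sigma>. L x \<in> W}"
      by blast
  qed
qed

locale gauge_set =
  fixes \<sigma> :: "'v::real_vector topology" and U :: "'v set"
  assumes lc: "locally_convex \<sigma>" and open_U: "openin \<sigma> U" and convex_U: "convex U"
    and zero_U: "0 \<in> U"
begin

definition gauge :: "'v \<Rightarrow> real" where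
  "gauge x = Inf {t. 0 < t \<and> (1 / t) *\<^sub>R x \<in> U}"

lemma gauge_set_nonempty: "{t. 0 < t \<and> (1 / t) *\<^sub>R x \<in> U} \<noteq> {}"
proof -
  obtain \<delta> where "0 < \<delta>" "\<And>t. \<bar>t\<bar> < \<delta> \<Longrightarrow> t *\<^sub>R x \<in> U"
    using locally_convex_absorbing[OF lc open_U zero_U] by blast
  then have "0 < 2 / \<delta>" "(1 / (2 / \<delta>)) *\<^sub>R x \<in> U"
    by auto
  then show ?thesis
    by blast
qed

lemma gauge_nonneg: "0 \<le> gauge x"
  unfolding gauge_def by (rule cInf_greatest[OF gauge_set_nonempty]) auto

lemma gauge_le: "0 < t \<Longrightarrow> (1 / t) *\<^sub>R x \<in> U \<Longrightarrow> gauge x \<le> t"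
  unfolding gauge_def by (rule cInf_lower) (auto intro: bdd_belowI[of _ 0])

lemma gauge_less_imp_mem:
  assumes "gauge x < t"
  shows "(1 / t) *\<^sub>R x \<in> U"
proof -
  obtain s where s: "0 < s" "(1 / s) *\<^sub>R x \<in> U" "s < t"
    using assms gauge_set_nonempty unfolding gauge_def
    by (subst (asm) cInf_less_iff) (auto intro: bdd_belowI[of _ 0])
  then have "(s / t) *\<^sub>R ((1 / s) *\<^sub>R x) + (1 - s / t) *\<^sub>R 0 \<in> U"
    using zero_U by (intro convex_U[unfolded convex_def, rule_format]) auto
  then show ?thesis
    using s by simp
qed

lemma gauge_less_1:
  assumes "x \<in> U"
  shows "gauge x < 1"
proof -
  obtain \<delta> where \<delta>: "0 < \<delta>" "\<And>t. \<bar>t - 1\<bar> < \<delta> \<Longrightarrow> 0 + t *\<^sub>R x \<in> U"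
    using locally_convex_line_open[OF lc open_U, of 0 1 x] assms by auto
  then have "gauge x \<le> 1 / (1 + \<delta> / 2)"
    by (intro gauge_le) auto
  also have "\<dots> < 1"
    using \<delta>(1) by simp
  finally show ?thesis .
qed

lemma gauge_ge_1: "x \<notin> U \<Longrightarrow> 1 \<le> gauge x"
  using gauge_less_imp_mem[of x 1] by force

lemma gauge_add: "gauge (x + y) \<le> gauge x + gauge y"
proof (rule field_le_epsilon)
  fix e :: real
  assume e: "0 < e"
  define a where "a = gauge x + e / 2"
  define b where "b = gauge y + e / 2"
  have a: "0 < a" "(1 / a) *\<^sub>R x \<in> U" and b: "0 < b" "(1 / b) *\<^sub>R y \<in> U"
    using gauge_less_imp_mem gauge_nonneg e unfolding a_def b_def by (auto simp: add_nonneg_pos)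
  then have "(a / (a + b)) *\<^sub>R ((1 / a) *\<^sub>R x) + (b / (a + b)) *\<^sub>R ((1 / b) *\<^sub>R y) \<in> U"
    by (intro convex_U[unfolded convex_def, rule_format]) (auto simp: divide_simps)
  then have "(1 / (a + b)) *\<^sub>R (x + y) \<in> U"
    using a b by (simp add: scaleR_add_right)
  then have "gauge (x + y) \<le> a + b"
    using a b by (intro gauge_le) auto
  then show "gauge (x + y) \<le> gauge x + gauge y + e"
    unfolding a_def b_def by simp
qed

lemma gauge_scale:
  assumes c: "0 < c"
  shows "gauge (c *\<^sub>R x) \<le> c * gauge x"
proof -
  have "gauge (c *\<^sub>R x) / c \<le> gauge x"
  proof (rule field_le_epsilon)
    fix e :: real
    assume e: "0 < e"
    define t where "t = gauge x + e"
    have t: "0 < t" "(1 / t) *\<^sub>R x \<in> U"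
      using gauge_less_imp_mem gauge_nonneg e unfolding t_def by (auto simp: add_nonneg_pos)
    then have "gauge (c *\<^sub>R x) \<le> c * t"
      using c by (intro gauge_le) auto
    then show "gauge (c *\<^sub>R x) / c \<le> gauge x + e"
      using c unfolding t_def by (simp add: divide_simps mult.commute)
  qed
  then show ?thesis
    using c by (simp add: divide_simps mult.commute)
qed

lemma sublinear_gauge: "sublinear gauge"
proof (rule sublinearI[OF gauge_add gauge_scale])
  show "gauge 0 = 0"
  proof (rule antisym)
    show "gauge 0 \<le> 0"
    proof (rule field_le_epsilon)
      fix e :: real
      assume "0 < e"
      then show "gauge 0 \<le> 0 + e"
        using gauge_le[of e 0] zero_U by simp
    qed
  qed (rule gauge_nonneg)
qed


lemma linear_le_gauge_less_1: "(\<And>x. L x \<le> gauge x) \<Longrightarrow> v \<in> U \<Longrightarrow> L v < 1"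
  using gauge_less_1[of v] le_less_trans by blast

lemma linear_le_gauge_continuous:
  assumes L: "linear L" "\<And>x. L x \<le> gauge x"
  shows "continuous_map \<sigma> euclideanreal L"
proof (rule linear_continuous_map_if_bounded_nbhd[OF lc L(1)])
  show "openin \<sigma> (U \<inter> (\<lambda>v. 0 + (- 1) *\<^sub>R v) ` U)"
    using open_U locally_convex_openin_affine_image[OF lc open_U, of "- 1" 0] by (simp add: openin_Int)
  show "0 \<in> U \<inter> (\<lambda>v. 0 + (- 1) *\<^sub>R v) ` U"
    using zero_U by force
  fix v
  assume "v \<in> U \<inter> (\<lambda>v. 0 + (- 1) *\<^sub>R v) ` U"
  then have "L v < 1" "L (- v) < 1"
    using linear_le_gauge_less_1[OF L(2)] by force+
  then show "\<bar>L v\<bar> < 1"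
    using linear_neg[OF L(1), of v] by simp
qed

end

lemma convex_scaled_sums:
  assumes "convex A" "convex B"
  shows "convex ((\<lambda>(a, b). c *\<^sub>R a + b) ` (A \<times> B))"
proof -
  have "linear (\<lambda>(a, b :: 'a::real_vector). c *\<^sub>R a + b)"
    by (intro linearI) (auto simp: algebra_simps)
  then show ?thesis
    using assms by (intro convex_linear_image convex_Times)
qed

text \<open>The functional comes from Hahn--Banach applied to the gauge of \<open>w0 - A + B\<close>, which is an
  open convex neighbourhood of \<open>0\<close> not containing \<open>w0 = a0 - b0\<close>.\<close>
theorem separation_open_convex:
  assumes lc: "locally_convex \<sigma>" and A: "openin \<sigma> A" "convex A" "A \<noteq> {}"
    and B: "convex B" and disjoint: "A \<inter> B = {}"
  obtains L where "linear L" "continuous_map \<sigma> euclideanreal L" "\<And>a b. a \<in> A \<Longrightarrow> b \<in> B \<Longrightarrow> L b < L a"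
proof (cases "B = {}")
  case True
  then show ?thesis
    using that[of "\<lambda>_. 0"] by (simp add: linear_zero)
next
  case False
  obtain a0 b0 where ab0: "a0 \<in> A" "b0 \<in> B"
    using A(3) False by blast
  define w0 where "w0 = a0 - b0"
  define U where "U = (\<lambda>(a, b). (- 1) *\<^sub>R a + b) ` (A \<times> (\<lambda>b. w0 + b) ` B)"
  have U_iff: "z \<in> U \<longleftrightarrow> (\<exists>a\<in>A. \<exists>b\<in>B. z = w0 - a + b)" for z
    unfolding U_def by (force simp: algebra_simps)
  interpret gauge_set \<sigma> U
  proof
    show "openin \<sigma> U"
      unfolding U_def by (intro locally_convex_openin_scaled_sums[OF lc A(1)]) simp
    show "convex U"
      unfolding U_def using A(2) B by (intro convex_scaled_sums convex_translation)
    show "0 \<in> U"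
      using U_iff ab0 unfolding w0_def by force
  qed (fact lc)
  have "w0 \<notin> U"
    using U_iff disjoint by (force simp: algebra_simps)
  obtain L where L: "linear L" "\<And>x. L x \<le> gauge x" "L w0 = gauge w0"
    using hahn_banach[OF sublinear_gauge] by blast
  have "1 \<le> L w0"
    using gauge_ge_1[OF \<open>w0 \<notin> U\<close>] L(3) by simp
  moreover have "L (w0 - a + b) < 1" if "a \<in> A" "b \<in> B" for a b
    using linear_le_gauge_less_1[OF L(2)] U_iff that by blast
  ultimately have separates: "L b < L a" if "a \<in> A" "b \<in> B" for a b
    using that L(1) by (force simp: linear_add linear_diff)
  have "continuous_map \<sigma> euclideanreal L"
    using linear_le_gauge_continuous[OF L(1,2)] .
  with L(1) separates show ?thesis
    using that by blast
qed

lemma compactin_finite_index_cover: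
  assumes "compactin X K" and N: "\<And>k. k \<in> K \<Longrightarrow> openin X (N k)" "\<And>k. k \<in> K \<Longrightarrow> k \<in> N k"
  obtains K0 where "K0 \<subseteq> K" "finite K0" "K \<subseteq> \<Union>(N ` K0)"
proof -
  have "K \<subseteq> \<Union>(N ` K)"
    using N(2) by blast
  then obtain \<N> where "finite \<N>" "\<N> \<subseteq> N ` K" "K \<subseteq> \<Union>\<N>"
    using compactinD[of X K "N ` K"] assms(1) N(1) by blast
  moreover from this obtain K0 where "K0 \<subseteq> K" "finite K0" "\<N> = N ` K0"
    using finite_subset_image[of \<N> N K] by blast
  ultimately show ?thesis
    using that by blast
qed

lemma locally_convex_half_nbhd_at:
  assumes lc: "locally_convex \<sigma>" and V: "openin \<sigma> V" "k \<in> V"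
  obtains M where "openin \<sigma> M" "convex M" "0 \<in> M" "\<And>a b. a \<in> M \<Longrightarrow> b \<in> M \<Longrightarrow> k + (a + b) \<in> V"
proof -
  have "openin \<sigma> {v. k + 1 *\<^sub>R v \<in> V}"
    by (rule locally_convex_openin_affine_preimage[OF lc V(1)])
  moreover have "0 \<in> {v. k + 1 *\<^sub>R v \<in> V}"
    using V(2) by simp
  ultimately obtain M where "openin \<sigma> M" "convex M" "0 \<in> M"
    "\<And>a b. a \<in> M \<Longrightarrow> b \<in> M \<Longrightarrow> a + b \<in> {v. k + 1 *\<^sub>R v \<in> V}"
    by (rule locally_convex_half_nbhd[OF lc]) blast
  then show ?thesis
    using that by auto
qed

text \<open>With \<open>k + M k + M k\<close> missing \<open>E\<close>, the sets \<open>k + M k\<close> cover \<open>K\<close>; intersecting the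
  \<open>M k\<close> of a finite subcover gives \<open>U\<close>.\<close>
lemma locally_convex_compact_thicken:
  assumes lc: "locally_convex \<sigma>" and K: "compactin \<sigma> K" "K \<noteq> {}"
    and apart: "\<And>k. k \<in> K \<Longrightarrow> \<exists>V. openin \<sigma> V \<and> k \<in> V \<and> V \<inter> E = {}"
  obtains U where "openin \<sigma> U" "convex U" "0 \<in> U" "\<And>k u. k \<in> K \<Longrightarrow> u \<in> U \<Longrightarrow> k + u \<notin> E"
proof -
  have "\<exists>M. openin \<sigma> M \<and> convex M \<and> 0 \<in> M \<and> (\<forall>a\<in>M. \<forall>b\<in>M. k + (a + b) \<notin> E)"
    if "k \<in> K" for k
  proof -
    obtain V where V: "openin \<sigma> V" "k \<in> V" "V \<inter> E = {}"
      using apart[OF \<open>k \<in> K\<close>] by blast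
    obtain M where "openin \<sigma> M" "convex M" "0 \<in> M" "\<And>a b. a \<in> M \<Longrightarrow> b \<in> M \<Longrightarrow> k + (a + b) \<in> V"
      using locally_convex_half_nbhd_at[OF lc V(1,2)] by blast
    with V(3) show ?thesis
      by blast
  qed
  then obtain M where M: "\<And>k. k \<in> K \<Longrightarrow> openin \<sigma> (M k) \<and> convex (M k) \<and> 0 \<in> M k
      \<and> (\<forall>a\<in>M k. \<forall>b\<in>M k. k + (a + b) \<notin> E)"
    by metis
  have "openin \<sigma> {v. (- k) + 1 *\<^sub>R v \<in> M k}" if "k \<in> K" for k
    using locally_convex_openin_affine_preimage[OF lc] M[OF that] by blast
  moreover have "k \<in> {v. (- k) + 1 *\<^sub>R v \<in> M k}" if "k \<in> K" for k
    using M[OF that] by simp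
  ultimately obtain K0 where K0: "K0 \<subseteq> K" "finite K0" "K \<subseteq> (\<Union>k\<in>K0. {v. (- k) + 1 *\<^sub>R v \<in> M k})"
    by (rule compactin_finite_index_cover[OF K(1), of "\<lambda>k. {v. (- k) + 1 *\<^sub>R v \<in> M k}"]) blast+
  then have "K0 \<noteq> {}"
    using K(2) by auto
  show ?thesis
  proof (rule that)
    show "openin \<sigma> (\<Inter>(M ` K0))"
      using K0 \<open>K0 \<noteq> {}\<close> M by (intro openin_Inter) auto
    show "convex (\<Inter>(M ` K0))"
      using K0 M by (intro convex_Inter) auto
    show "0 \<in> \<Inter>(M ` K0)"
      using K0 M by auto
    fix k u
    assume "k \<in> K" "u \<in> \<Inter>(M ` K0)"
    then obtain ki where ki: "ki \<in> K0" "- ki + k \<in> M ki" "u \<in> M ki"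
      using K0(3) by auto
    then have "ki + ((- ki + k) + u) \<notin> E"
      using M K0(1) by blast
    then show "k + u \<notin> E"
      by (simp add: algebra_simps)
  qed
qed

lemma linear_negative_in_nbhd:
  assumes lc: "locally_convex \<sigma>" and U: "openin \<sigma> U" "0 \<in> U"
    and L: "linear (L :: 'v::real_vector \<Rightarrow> real)" "L w \<noteq> 0"
  obtains u where "u \<in> U" "L u < 0"
proof -
  obtain \<delta> where \<delta>: "0 < \<delta>" "\<And>t. \<bar>t\<bar> < \<delta> \<Longrightarrow> t *\<^sub>R w \<in> U"
    using locally_convex_absorbing[OF lc U] by blast
  define t where "t = (if 0 < L w then - (\<delta> / 2) else \<delta> / 2)"
  have "\<bar>t\<bar> < \<delta>"
    using \<delta>(1) unfolding t_def by auto
  moreover have "L (t *\<^sub>R w) < 0"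
    using \<delta>(1) L(2) unfolding t_def linear_scale[OF L(1)] by (auto simp: mult_less_0_iff)
  ultimately show ?thesis
    using that \<delta>(2) by blast
qed

lemma locally_convex_open_convex_sums:
  assumes lc: "locally_convex \<sigma>" and U: "openin \<sigma> U" "convex U" and K: "convex K"
  shows "openin \<sigma> {k + u | k u. k \<in> K \<and> u \<in> U}" "convex {k + u | k u. k \<in> K \<and> u \<in> U}"
proof -
  have eq: "{k + u | k u. k \<in> K \<and> u \<in> U} = (\<lambda>(u, k). 1 *\<^sub>R u + k) ` (U \<times> K)"
  proof (intro set_eqI iffI)
    fix z
    assume "z \<in> {k + u | k u. k \<in> K \<and> u \<in> U}"
    then obtain k u where "k \<in> K" "u \<in> U" "z = u + k"
      by (auto simp: add.commute)
    then show "z \<in> (\<lambda>(u, k). 1 *\<^sub>R u + k) ` (U \<times> K)"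
      by (intro image_eqI[of _ _ "(u, k)"]) auto
  next
    fix z
    assume "z \<in> (\<lambda>(u, k). 1 *\<^sub>R u + k) ` (U \<times> K)"
    then obtain k u where "k \<in> K" "u \<in> U" "z = u + k"
      by auto
    then show "z \<in> {k + u | k u. k \<in> K \<and> u \<in> U}"
      by (auto simp: add.commute)
  qed
  show "openin \<sigma> {k + u | k u. k \<in> K \<and> u \<in> U}"
    unfolding eq by (intro locally_convex_openin_scaled_sums[OF lc U(1)]) simp
  show "convex {k + u | k u. k \<in> K \<and> u \<in> U}"
    unfolding eq using U(2) K by (rule convex_scaled_sums)
qed

text \<open>Thicken \<open>K\<close> to the open convex set \<open>K + U\<close> missing \<open>E\<close>; the gap between \<open>L\<close> on
  \<open>K\<close> and on \<open>E\<close> is then at least \<open>- L u\<close> for some \<open>u \<in> U\<close>.\<close>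
theorem separation_compact_convex:
  assumes lc: "locally_convex \<sigma>" and K: "compactin \<sigma> K" "convex K" "K \<noteq> {}"
    and E: "convex E" and apart: "\<And>k. k \<in> K \<Longrightarrow> \<exists>V. openin \<sigma> V \<and> k \<in> V \<and> V \<inter> E = {}"
  obtains L c where "linear L" "continuous_map \<sigma> euclideanreal L"
    "\<And>k. k \<in> K \<Longrightarrow> c < L k" "\<And>e. e \<in> E \<Longrightarrow> L e < c"
proof (cases "E = {}")
  case True
  then show ?thesis
    using that[of "\<lambda>_. 0" "- 1"] by (simp add: linear_zero)
next
  case False
  obtain U where U: "openin \<sigma> U" "convex U" "0 \<in> U" "\<And>k u. k \<in> K \<Longrightarrow> u \<in> U \<Longrightarrow> k + u \<notin> E"
    using locally_convex_compact_thicken[OF lc K(1,3) apart] by blast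
  define A where "A = {k + u | k u. k \<in> K \<and> u \<in> U}"
  have A: "openin \<sigma> A" "convex A"
    unfolding A_def using locally_convex_open_convex_sums[OF lc U(1,2) K(2)] by auto
  have "A \<noteq> {}" "A \<inter> E = {}"
    unfolding A_def using K(3) U(3,4) by fastforce+
  obtain L where L: "linear L" "continuous_map \<sigma> euclideanreal L"
    "\<And>a e. a \<in> A \<Longrightarrow> e \<in> E \<Longrightarrow> L e < L a"
    using separation_open_convex[OF lc A \<open>A \<noteq> {}\<close> E \<open>A \<inter> E = {}\<close>] by blast
  obtain e0 a0 where "e0 \<in> E" "a0 \<in> A"
    using False \<open>A \<noteq> {}\<close> by blast
  then have "L (a0 - e0) \<noteq> 0"
    using L(3)[of a0 e0] L(1) by (simp add: linear_diff)
  then obtain u1 where u1: "u1 \<in> U" "L u1 < 0"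
    using linear_negative_in_nbhd[OF lc U(1,3) L(1)] by blast
  have "compact (L ` K)"
    using image_compactin[OF K(1) L(2)] by (simp add: compactin_euclidean_iff)
  then obtain m where "m \<in> L ` K" "\<And>l. l \<in> L ` K \<Longrightarrow> m \<le> l"
    using compact_attains_inf[of "L ` K"] K(3) by auto
  then obtain k0 where k0: "k0 \<in> K" "\<And>k. k \<in> K \<Longrightarrow> L k0 \<le> L k"
    by auto
  show ?thesis
  proof (rule that[OF L(1,2)])
    show "L k0 + L u1 < L k" if "k \<in> K" for k
      using k0(2)[OF that] u1(2) by simp
    show "L e < L k0 + L u1" if "e \<in> E" for e
    proof -
      have "k0 + u1 \<in> A"
        unfolding A_def using k0(1) u1(1) by blast
      then have "L e < L (k0 + u1)"
        by (rule L(3)[OF _ that])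
      then show ?thesis
        using linear_add[OF L(1), of k0 u1] by simp
    qed
  qed
qed

section \<open>Weak* separation in the algebraic dual\<close>

instantiation "fun" :: (type, real_vector) real_vector
begin

definition scaleR_fun :: "real \<Rightarrow> ('a \<Rightarrow> 'b) \<Rightarrow> 'a \<Rightarrow> 'b" where
  "scaleR_fun c f = (\<lambda>x. c *\<^sub>R f x)"

instance
  by standard (simp_all add: scaleR_fun_def fun_eq_iff scaleR_add_right scaleR_add_left)

end

lemma scaleR_fun_apply [simp]: "(c *\<^sub>R f) x = c *\<^sub>R f x"
  by (simp add: scaleR_fun_def)

lemma sum_fun_apply: "(\<Sum>i\<in>I. f i) x = (\<Sum>i\<in>I. f i x)"
  by (induction I rule: infinite_finite_induct) (auto simp: plus_fun_def zero_fun_def)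

abbreviation pointwise_topology :: "('a \<Rightarrow> real) topology" where
  "pointwise_topology \<equiv> product_topology (\<lambda>_. euclideanreal) UNIV"

lemma topspace_pointwise_topology [simp]: "topspace pointwise_topology = UNIV"
  by (simp add: topspace_product_topology PiE_UNIV_domain)

lemma continuous_map_pointwise_eval: "continuous_map pointwise_topology euclideanreal (\<lambda>\<psi>. \<psi> i)"
  by (rule continuous_map_product_projection) simp

lemma openin_pointwise_box:
  assumes "finite I"
  shows "openin pointwise_topology {\<psi>::'a \<Rightarrow> real. \<forall>i\<in>I. \<bar>\<psi> i\<bar> < \<delta>}"
  using assms
proof (induction I rule: finite_induct)
  case (insert i I)
  have "openin pointwise_topology {\<psi> \<in> topspace pointwise_topology. \<psi> i \<in> ball 0 \<delta>}"
    by (intro openin_continuous_map_preimage[OF continuous_map_pointwise_eval]) simp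
  then have "openin pointwise_topology ({\<psi>::'a \<Rightarrow> real. \<bar>\<psi> i\<bar> < \<delta>} \<inter> {\<psi>. \<forall>i\<in>I. \<bar>\<psi> i\<bar> < \<delta>})"
    using insert.IH by (intro openin_Int) auto
  moreover have "{\<psi>::'a \<Rightarrow> real. \<bar>\<psi> i\<bar> < \<delta>} \<inter> {\<psi>. \<forall>i\<in>I. \<bar>\<psi> i\<bar> < \<delta>}
      = {\<psi>. \<forall>i\<in>insert i I. \<bar>\<psi> i\<bar> < \<delta>}"
    by auto
  ultimately show ?case
    by simp
qed (use openin_topspace[of pointwise_topology] in simp)

lemma convex_pointwise_box: "convex {\<psi>::'a \<Rightarrow> real. \<forall>i\<in>I. \<bar>\<psi> i\<bar> < \<delta>}"
proof -
  have "convex ((\<lambda>\<psi>::'a \<Rightarrow> real. \<psi> i) -` ball 0 \<delta>)" for i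
    by (intro convex_linear_vimage convex_ball) (auto intro: linearI)
  then have "convex (\<Inter>i\<in>I. (\<lambda>\<psi>::'a \<Rightarrow> real. \<psi> i) -` ball 0 \<delta>)"
    by (intro convex_INT) auto
  moreover have "(\<Inter>i\<in>I. (\<lambda>\<psi>::'a \<Rightarrow> real. \<psi> i) -` ball 0 \<delta>) = {\<psi>. \<forall>i\<in>I. \<bar>\<psi> i\<bar> < \<delta>}"
    by auto
  ultimately show ?thesis
    by simp
qed

lemma pointwise_box_in_nbhd:
  assumes U: "openin pointwise_topology U" "0 \<in> U"
  obtains I \<delta> where "finite I" "0 < \<delta>" "{\<psi>::'a \<Rightarrow> real. \<forall>i\<in>I. \<bar>\<psi> i\<bar> < \<delta>} \<subseteq> U"
proof -
  obtain V where V: "finite {i \<in> UNIV. V i \<noteq> topspace euclideanreal}"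
    "\<forall>i\<in>UNIV. openin euclideanreal (V i)" "0 \<in> Pi\<^sub>E UNIV V" "Pi\<^sub>E UNIV V \<subseteq> U"
    using bspec[OF U(1)[unfolded openin_product_topology_alt] U(2)] by (elim exE conjE) (rule that)
  define I where "I = {i. V i \<noteq> UNIV}"
  have "\<exists>d>0. ball 0 d \<subseteq> V i" for i
  proof -
    have "open (V i)" "0 \<in> V i"
      using V(2,3) by (auto simp: PiE_UNIV_domain)
    then show ?thesis
      using open_contains_ball by (metis zero_fun_def)
  qed
  then obtain d where d: "\<And>i. 0 < d i \<and> ball 0 (d i) \<subseteq> V i"
    by metis
  define \<delta> where "\<delta> = Min (insert 1 (d ` I))"
  have "finite I"
    using V(1) unfolding I_def by simp
  then have \<delta>: "0 < \<delta>" "\<And>i. i \<in> I \<Longrightarrow> \<delta> \<le> d i"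
    unfolding \<delta>_def using d by auto
  have "{\<psi>::'a \<Rightarrow> real. \<forall>i\<in>I. \<bar>\<psi> i\<bar> < \<delta>} \<subseteq> Pi\<^sub>E UNIV V"
  proof
    fix \<psi> :: "'a \<Rightarrow> real"
    assume \<psi>: "\<psi> \<in> {\<psi>. \<forall>i\<in>I. \<bar>\<psi> i\<bar> < \<delta>}"
    have "\<psi> i \<in> V i" for i
    proof (cases "i \<in> I")
      case True
      then have "\<psi> i \<in> ball 0 (d i)"
        using \<psi> \<delta>(2)[OF True] by auto
      then show ?thesis
        using d by blast
    qed (simp add: I_def)
    then show "\<psi> \<in> Pi\<^sub>E UNIV V"
      by (simp add: PiE_UNIV_domain)
  qed
  then show ?thesis
    using that[OF \<open>finite I\<close> \<delta>(1)] V(4) by blast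
qed

lemma locally_convex_pointwise_topology: "locally_convex (pointwise_topology :: ('a \<Rightarrow> real) topology)"
  unfolding locally_convex_def
proof (intro conjI allI impI)
  show "topspace pointwise_topology = (UNIV :: ('a \<Rightarrow> real) set)"
    by simp
  have "\<forall>k. continuous_map (prod_topology pointwise_topology pointwise_topology) euclideanreal
      (\<lambda>z. fst z k + snd z k)"
    by (intro allI continuous_map_add continuous_map_compose[OF continuous_map_fst continuous_map_pointwise_eval, unfolded o_def]
        continuous_map_compose[OF continuous_map_snd continuous_map_pointwise_eval, unfolded o_def])
  then show "continuous_map (prod_topology pointwise_topology pointwise_topology) pointwise_topology
      (\<lambda>(x, y). x + y)"
    unfolding continuous_map_componentwise_UNIV by (simp add: case_prod_beta plus_fun_def)
  have "\<forall>k. continuous_map (prod_topology euclideanreal pointwise_topology) euclideanreal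
      (\<lambda>z. fst z * snd z k)"
    by (intro allI continuous_map_real_mult continuous_map_fst
        continuous_map_compose[OF continuous_map_snd continuous_map_pointwise_eval, unfolded o_def])
  then show "continuous_map (prod_topology euclideanreal pointwise_topology) pointwise_topology
      (\<lambda>(a, x). a *\<^sub>R x)"
    unfolding continuous_map_componentwise_UNIV by (simp add: case_prod_beta)
  fix U :: "('a \<Rightarrow> real) set"
  assume "openin pointwise_topology U \<and> 0 \<in> U"
  then obtain I \<delta> where "finite I" "0 < \<delta>" "{\<psi>::'a \<Rightarrow> real. \<forall>i\<in>I. \<bar>\<psi> i\<bar> < \<delta>} \<subseteq> U"
    using pointwise_box_in_nbhd by blast
  then show "\<exists>V. openin pointwise_topology V \<and> convex V \<and> 0 \<in> V \<and> V \<subseteq> U"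
    using openin_pointwise_box convex_pointwise_box by (intro exI[of _ "{\<psi>. \<forall>i\<in>I. \<bar>\<psi> i\<bar> < \<delta>}"]) auto
qed

text \<open>It vanishes wherever the coordinates in some box around \<open>0\<close> vanish, so it only sees
  those finitely many coordinates.\<close>
lemma continuous_linear_pointwise_finite_sum:
  fixes L :: "('a \<Rightarrow> real) \<Rightarrow> real"
  assumes L: "linear L" "continuous_map pointwise_topology euclideanreal L"
  obtains I c where "finite I" "\<And>\<psi>. L \<psi> = (\<Sum>i\<in>I. c i * \<psi> i)"
proof -
  have "openin pointwise_topology {\<psi> \<in> topspace pointwise_topology. L \<psi> \<in> ball 0 1}"
    by (rule openin_continuous_map_preimage[OF L(2)]) simp
  moreover have "0 \<in> {\<psi> \<in> topspace pointwise_topology. L \<psi> \<in> ball 0 1}"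
    using linear_0[OF L(1)] by simp
  ultimately obtain I \<delta> where I: "finite I" "0 < \<delta>"
    "{\<psi>::'a \<Rightarrow> real. \<forall>i\<in>I. \<bar>\<psi> i\<bar> < \<delta>} \<subseteq> {\<psi>. \<bar>L \<psi>\<bar> < 1}"
    by (rule pointwise_box_in_nbhd) (auto simp: dist_real_def)
  have vanish: "L \<psi> = 0" if "\<And>i. i \<in> I \<Longrightarrow> \<psi> i = 0" for \<psi>
  proof (rule ccontr)
    assume "L \<psi> \<noteq> 0"
    then have "\<bar>L ((1 / \<bar>L \<psi>\<bar>) *\<^sub>R \<psi>)\<bar> = 1"
      by (simp add: linear_scale[OF L(1)] abs_mult)
    moreover have "(1 / \<bar>L \<psi>\<bar>) *\<^sub>R \<psi> \<in> {\<psi>. \<forall>i\<in>I. \<bar>\<psi> i\<bar> < \<delta>}"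
      using I(2) that by simp
    then have "\<bar>L ((1 / \<bar>L \<psi>\<bar>) *\<^sub>R \<psi>)\<bar> < 1"
      using I(3) by blast
    ultimately show False
      by simp
  qed
  define c where "c i = L (\<lambda>j. if j = i then 1 else 0)" for i
  have "L \<psi> = (\<Sum>i\<in>I. c i * \<psi> i)" for \<psi>
  proof -
    define \<psi>' where "\<psi>' = (\<Sum>i\<in>I. \<psi> i *\<^sub>R (\<lambda>j. if j = i then 1 else 0 :: real))"
    have "\<psi>' j = (if j \<in> I then \<psi> j else 0)" for j
      unfolding \<psi>'_def sum_fun_apply using I(1) by (simp add: if_distrib cong: if_cong)
    then have "L (\<psi> - \<psi>') = 0"
      by (intro vanish) simp
    then have "L \<psi> = L \<psi>'"
      using linear_diff[OF L(1)] by simp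
    also have "\<dots> = (\<Sum>i\<in>I. c i * \<psi> i)"
      unfolding \<psi>'_def c_def by (simp add: linear_sum[OF L(1)] linear_scale[OF L(1)] mult.commute)
    finally show ?thesis .
  qed
  then show ?thesis
    using that I(1) by blast
qed

lemma convex_fun_imp_convex:
  assumes "convex_fun C"
  shows "convex C"
proof (rule convexI)
  fix a b :: "'a \<Rightarrow> real" and u v :: real
  assume "a \<in> C" "b \<in> C" "0 \<le> u" "0 \<le> v" "u + v = 1"
  moreover from this have "u *\<^sub>R a + v *\<^sub>R b = (\<lambda>y. u * a y + (1 - u) * b y)"
    by (auto simp: fun_eq_iff)
  ultimately show "u *\<^sub>R a + v *\<^sub>R b \<in> C"
    using assms unfolding convex_fun_def by auto
qed

text \<open>Separate in the whole product space, whose continuous functionals are finite combinations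
  of coordinates; on linear functionals such a combination is evaluation at a single point.\<close>
lemma wstar_closed_convex_separation:
  fixes \<tau> :: "'a::real_vector topology"
  assumes C: "closedin (wstar \<tau>) C" "convex_fun C" and \<phi>: "\<phi> \<in> dual \<tau>" "\<phi> \<notin> C"
  obtains u c where "\<And>\<psi>. \<psi> \<in> C \<Longrightarrow> \<psi> u < c" "c < \<phi> u"
proof -
  obtain Q where Q: "closedin pointwise_topology Q" "C = Q \<inter> dual \<tau>"
    using C(1) unfolding wstar_def closedin_subtopology by blast
  have "openin pointwise_topology (UNIV - Q)" "\<phi> \<in> UNIV - Q" "(UNIV - Q) \<inter> C = {}"
    using Q \<phi> unfolding closedin_def by auto
  then have apart: "\<And>k. k \<in> {\<phi>} \<Longrightarrow> \<exists>V. openin pointwise_topology V \<and> k \<in> V \<and> V \<inter> C = {}"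
    by blast
  have "compactin pointwise_topology {\<phi>}"
    by simp
  then obtain L c where L: "linear L" "continuous_map pointwise_topology euclideanreal L"
    "\<And>k. k \<in> {\<phi>} \<Longrightarrow> c < L k" "\<And>\<psi>. \<psi> \<in> C \<Longrightarrow> L \<psi> < c"
    using separation_compact_convex[OF locally_convex_pointwise_topology _ convex_singleton _
        convex_fun_imp_convex[OF C(2)] apart] by blast
  obtain I a where I: "finite I" "\<And>\<psi>. L \<psi> = (\<Sum>i\<in>I. a i * \<psi> i)"
    using continuous_linear_pointwise_finite_sum[OF L(1,2)] by blast
  define u where "u = (\<Sum>i\<in>I. a i *\<^sub>R i)"
  have "L \<psi> = \<psi> u" if "\<psi> \<in> dual \<tau>" for \<psi>
  proof -
    have "linear \<psi>"
      using that unfolding dual_def by blast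
    then show ?thesis
      unfolding I(2) u_def by (simp add: linear_sum linear_scale)
  qed
  then show ?thesis
    using that[of u c] L(3,4) \<phi>(1) Q(2) by force
qed

section \<open>Epigraphs and \<open>\<epsilon>\<close>-subgradients\<close>

lemma prod_real_convex_nbhd:
  fixes \<tau> :: "'a::real_vector topology"
  assumes lc: "locally_convex \<tau>" and U: "openin (prod_topology \<tau> euclideanreal) U" "0 \<in> U"
  obtains V where "openin (prod_topology \<tau> euclideanreal) V" "convex V" "0 \<in> V" "V \<subseteq> U"
proof -
  have U00: "(0, 0) \<in> U"
    using U(2) by (simp add: zero_prod_def)
  obtain W1 W2 where W: "openin \<tau> W1" "openin euclideanreal W2" "0 \<in> W1" "0 \<in> W2" "W1 \<times> W2 \<subseteq> U"
    using U(1)[unfolded openin_prod_topology_alt, rule_format, OF U00] by blast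
  obtain V1 where V1: "openin \<tau> V1" "convex V1" "0 \<in> V1" "V1 \<subseteq> W1"
    using locally_convex_convex_nbhd[OF lc W(1,3)] by blast
  have "open W2"
    using W(2) by simp
  then obtain d where d: "0 < d" "ball 0 d \<subseteq> W2"
    using W(4) open_contains_ball by blast
  show ?thesis
  proof (rule that)
    show "openin (prod_topology \<tau> euclideanreal) (V1 \<times> ball (0::real) d)"
      using V1(1) by (simp add: openin_prod_Times_iff)
    show "convex (V1 \<times> ball (0::real) d)"
      using V1(2) by (intro convex_Times convex_ball)
    show "0 \<in> V1 \<times> ball (0::real) d"
      using V1(3) d(1) by (simp add: zero_prod_def)
    show "V1 \<times> ball (0::real) d \<subseteq> U"
      using Sigma_mono[OF V1(4) d(2)] W(5) by (rule subset_trans)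
  qed
qed

lemma locally_convex_prod_real:
  fixes \<tau> :: "'a::real_vector topology"
  assumes lc: "locally_convex \<tau>"
  shows "locally_convex (prod_topology \<tau> euclideanreal)"
  unfolding locally_convex_def
proof (intro conjI allI impI)
  let ?P = "prod_topology \<tau> euclideanreal"
  show "topspace ?P = UNIV"
    using locally_convex_topspace[OF lc] by simp
  have "continuous_map (prod_topology ?P ?P) ?P
      (\<lambda>z. (fst (fst z) + fst (snd z), snd (fst z) + snd (snd z)))"
  proof -
    note continuous_map_compose[OF continuous_map_fst continuous_map_fst, unfolded o_def]
      continuous_map_compose[OF continuous_map_snd continuous_map_fst, unfolded o_def]
      continuous_map_compose[OF continuous_map_fst continuous_map_snd, unfolded o_def]
      continuous_map_compose[OF continuous_map_snd continuous_map_snd, unfolded o_def]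
    then show ?thesis
      unfolding continuous_map_pairwise o_def
      by (auto intro!: locally_convex_continuous_add[OF lc] continuous_map_add)
  qed
  then show "continuous_map (prod_topology ?P ?P) ?P (\<lambda>(x, y). x + y)"
    by (rule continuous_map_eq) (auto simp: case_prod_beta)
  have "continuous_map (prod_topology euclideanreal ?P) ?P
      (\<lambda>z. (fst z *\<^sub>R fst (snd z), fst z * snd (snd z)))"
  proof -
    note continuous_map_fst
      continuous_map_compose[OF continuous_map_snd continuous_map_fst, unfolded o_def]
      continuous_map_compose[OF continuous_map_snd continuous_map_snd, unfolded o_def]
    then show ?thesis
      unfolding continuous_map_pairwise o_def
      by (auto intro!: locally_convex_continuous_scaleR[OF lc] continuous_map_real_mult)
  qed
  then show "continuous_map (prod_topology euclideanreal ?P) ?P (\<lambda>(a, x). a *\<^sub>R x)"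
    by (rule continuous_map_eq) (auto simp: case_prod_beta)
  fix U
  assume "openin ?P U \<and> 0 \<in> U"
  then show "\<exists>V. openin ?P V \<and> convex V \<and> 0 \<in> V \<and> V \<subseteq> U"
    using prod_real_convex_nbhd[OF lc] by blast
qed

lemma locally_convex_segment:
  assumes "locally_convex \<sigma>"
  shows "compactin \<sigma> ((\<lambda>s. a + s *\<^sub>R b) ` {0..1})" "convex ((\<lambda>s. a + s *\<^sub>R b) ` {0..1})"
proof -
  show "compactin \<sigma> ((\<lambda>s. a + s *\<^sub>R b) ` {0..1})"
    by (rule image_compactin[OF _ locally_convex_continuous_line[OF assms]])
      (simp add: compactin_euclidean_iff)
  have "(\<lambda>s. a + s *\<^sub>R b) ` {0..1} = (+) a ` ((\<lambda>s. s *\<^sub>R b) ` {0..1})"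
    by (simp add: image_image)
  then show "convex ((\<lambda>s. a + s *\<^sub>R b) ` {0..1})"
    by (simp add: convex_translation convex_scaled)
qed

lemma dual_comb:
  assumes "\<phi> \<in> dual \<tau>" "\<psi> \<in> dual \<tau>"
  shows "(\<lambda>v. a * \<phi> v + b * \<psi> v) \<in> dual \<tau>"
proof -
  have "linear \<phi>" "linear \<psi>" "continuous_map \<tau> euclideanreal \<phi>" "continuous_map \<tau> euclideanreal \<psi>"
    using assms unfolding dual_def by auto
  then show ?thesis
    unfolding dual_def
    by (auto intro!: linearI continuous_map_add continuous_map_real_mult
        simp: linear_add linear_scale algebra_simps)
qed

lemma continuous_linear_prod_real:
  assumes L: "linear L" "continuous_map (prod_topology \<tau> euclideanreal) euclideanreal L"
  obtains w \<beta> where "w \<in> dual \<tau>" "\<And>v r. L (v, r) = w v + r * \<beta>"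
proof
  show "L (v, r) = L (v, 0) + r * L (0, 1)" for v r
  proof -
    have "L ((v, 0) + r *\<^sub>R (0, 1)) = L (v, 0) + r * L (0, 1)"
      by (simp only: linear_add[OF L(1)] linear_scale[OF L(1)] real_scaleR_def)
    then show ?thesis
      by simp
  qed
  have "linear (\<lambda>v. (v, 0::real))"
    by (auto intro: linearI)
  moreover have "continuous_map \<tau> (prod_topology \<tau> euclideanreal) (\<lambda>v. (v, 0::real))"
    by (simp add: continuous_map_pairwise o_def continuous_map_id[unfolded id_def])
  ultimately show "(\<lambda>v. L (v, 0)) \<in> dual \<tau>"
    unfolding dual_def using L linear_compose[of "\<lambda>v. (v, 0::real)" L]
      continuous_map_compose[of _ _ "\<lambda>v. (v, 0::real)" _ L] by (simp add: o_def)
qed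

lemma Gamma0_not_minf: "g \<in> Gamma0 \<tau> \<Longrightarrow> g x \<noteq> - \<infinity>"
  unfolding Gamma0_def by blast

lemma Gamma0_convex:
  "g \<in> Gamma0 \<tau> \<Longrightarrow> 0 \<le> u \<Longrightarrow> u \<le> 1 \<Longrightarrow>
    g (u *\<^sub>R x + (1 - u) *\<^sub>R y) \<le> ereal u * g x + ereal (1 - u) * g y"
  unfolding Gamma0_def by blast

lemma Gamma0_closed_sublevel: "g \<in> Gamma0 \<tau> \<Longrightarrow> closedin \<tau> {x. g x \<le> ereal c}"
  unfolding Gamma0_def by blast

lemma Gamma0_scale:
  assumes g: "g \<in> Gamma0 \<tau>" and e: "0 < e"
  shows "(\<lambda>z. ereal e * g z) \<in> Gamma0 \<tau>"
proof -
  have not_minf: "ereal a * g x \<noteq> - \<infinity>" if "0 \<le> a" for a x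
    using Gamma0_not_minf[OF g, of x] that by (cases "g x") (auto simp: ereal_mult_infty)
  obtain x0 where "g x0 \<noteq> \<infinity>"
    using g unfolding Gamma0_def by blast
  then have "ereal e * g x0 \<noteq> \<infinity>"
    using Gamma0_not_minf[OF g, of x0] by (cases "g x0") auto
  moreover have "ereal e * g (u *\<^sub>R x + (1 - u) *\<^sub>R y)
      \<le> ereal u * (ereal e * g x) + ereal (1 - u) * (ereal e * g y)"
    if u: "0 \<le> u" "u \<le> 1" for x y u
  proof -
    have "ereal e * g (u *\<^sub>R x + (1 - u) *\<^sub>R y) \<le> ereal e * (ereal u * g x + ereal (1 - u) * g y)"
      using Gamma0_convex[OF g u] e by (intro ereal_mult_left_mono) auto
    also have "\<dots> = (ereal u * g x) * ereal e + (ereal (1 - u) * g y) * ereal e"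
      using not_minf u by (subst mult.commute) (rule ereal_distrib; auto)
    finally show ?thesis
      by (simp add: mult_ac)
  qed
  moreover have "{x. ereal e * g x \<le> ereal c} = {x. g x \<le> ereal (c / e)}" for c
  proof -
    have "ereal e * g x \<le> ereal c \<longleftrightarrow> g x \<le> ereal (c / e)" for x
      using e Gamma0_not_minf[OF g, of x] by (cases "g x") (auto simp: pos_le_divide_eq mult.commute)
    then show ?thesis
      by blast
  qed
  ultimately show ?thesis
    unfolding Gamma0_def using not_minf e Gamma0_closed_sublevel[OF g] Gamma0_not_minf[OF g] by auto
qed

definition ereal_epigraph :: "('a \<Rightarrow> ereal) \<Rightarrow> ('a \<times> real) set" where
  "ereal_epigraph g = {p. g (fst p) \<le> ereal (snd p)}"

lemma convex_ereal_epigraph: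
  assumes g: "g \<in> Gamma0 \<tau>"
  shows "convex (ereal_epigraph g)"
proof (rule convexI)
  fix p q :: "'a \<times> real" and a b :: real
  assume pq: "p \<in> ereal_epigraph g" "q \<in> ereal_epigraph g" and ab: "0 \<le> a" "0 \<le> b" "a + b = 1"
  then have b: "b = 1 - a"
    by simp
  have "g (fst (a *\<^sub>R p + b *\<^sub>R q)) \<le> ereal a * g (fst p) + ereal (1 - a) * g (fst q)"
    using Gamma0_convex[OF g, of a "fst p" "fst q"] ab b by simp
  also have "\<dots> \<le> ereal a * ereal (snd p) + ereal (1 - a) * ereal (snd q)"
    using pq ab b unfolding ereal_epigraph_def by (intro add_mono ereal_mult_left_mono) auto
  also have "\<dots> = ereal (snd (a *\<^sub>R p + b *\<^sub>R q))"
    using b by simp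
  finally show "a *\<^sub>R p + b *\<^sub>R q \<in> ereal_epigraph g"
    unfolding ereal_epigraph_def by simp
qed

lemma Gamma0_epigraph_apart:
  assumes top: "topspace \<tau> = UNIV" and g: "g \<in> Gamma0 \<tau>" and below: "ereal r0 < g v0"
  obtains V where "openin (prod_topology \<tau> euclideanreal) V" "(v0, r0) \<in> V"
    "V \<inter> ereal_epigraph g = {}"
proof -
  obtain c where c: "r0 < c" "ereal c < g v0"
    using ereal_dense2[OF below] by (metis ereal_less(2) ereal_less_eq(3) less_imp_le not_less)
  have "openin \<tau> (topspace \<tau> - {v. g v \<le> ereal c})"
    using Gamma0_closed_sublevel[OF g] unfolding closedin_def by blast
  then have "openin \<tau> {v. \<not> g v \<le> ereal c}"
    using top by (simp add: set_diff_eq)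
  then have "openin (prod_topology \<tau> euclideanreal) ({v. \<not> g v \<le> ereal c} \<times> {..<c})"
    by (simp add: openin_prod_Times_iff)
  moreover have "({v. \<not> g v \<le> ereal c} \<times> {..<c}) \<inter> ereal_epigraph g = {}"
    unfolding ereal_epigraph_def by (force intro: order_trans)
  ultimately show ?thesis
    using that c by (simp add: not_le)
qed

text \<open>Normalising the slope of the separating functional in the real direction to \<open>-1\<close> gives the
  \<open>\<epsilon>\<close>-subgradient; the \<open>\<epsilon>/2\<close> gap at \<open>x\<close> makes that slope negative.\<close>
lemma eps_subgradient_from_separation:
  assumes g: "g \<in> Gamma0 \<tau>" "g x = ereal gx" and \<epsilon>: "0 < \<epsilon>" and w: "w \<in> dual \<tau>"
    and below: "c < w x + (gx - \<epsilon> / 2) * \<beta>"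
    and epi: "\<And>v r. g v \<le> ereal r \<Longrightarrow> w v + r * \<beta> < c"
  shows "\<beta> < 0" "(\<lambda>v. w v / - \<beta>) \<in> eps_subdiff \<tau> \<epsilon> g x"
proof -
  have "w x + gx * \<beta> < c"
    using epi g(2) by simp
  with below have "0 < - (\<epsilon> / 2) * \<beta>"
    by (simp add: algebra_simps)
  with \<epsilon> show \<beta>: "\<beta> < 0"
    by (simp add: mult_less_0_iff)
  have lin: "linear w"
    using w unfolding dual_def by blast
  have "(\<lambda>v. (1 / - \<beta>) * w v + 0 * w v) \<in> dual \<tau>"
    by (rule dual_comb[OF w w])
  then have "(\<lambda>v. w v / - \<beta>) \<in> dual \<tau>"
    by simp
  moreover have "g x + ereal (w (y - x) / - \<beta>) - ereal \<epsilon> \<le> g y" for y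
  proof (cases "g y")
    case (real r)
    then have "w y + r * \<beta> < c"
      by (intro epi) simp
    then have "w y + r * \<beta> < w x + (gx - \<epsilon> / 2) * \<beta>"
      using below by linarith
    then have "w (y - x) < (r - gx + \<epsilon> / 2) * - \<beta>"
      by (simp add: linear_diff[OF lin] algebra_simps)
    then have "w (y - x) / - \<beta> < r - gx + \<epsilon> / 2"
      using \<beta> by (intro pos_divide_less_eq[THEN iffD2]) simp_all
    then show ?thesis
      using real g(2) \<epsilon> by simp
  qed (use Gamma0_not_minf[OF g(1)] in auto)
  ultimately show "(\<lambda>v. w v / - \<beta>) \<in> eps_subdiff \<tau> \<epsilon> g x"
    unfolding eps_subdiff_def using g(2) by simp
qed

text \<open>If the graph of \<open>g\<close> along the segment from \<open>x\<close> to \<open>x + u\<close> stays above the chord from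
  \<open>g x - \<epsilon>/2\<close> with slope \<open>N\<close>, then separating that compact chord from the epigraph yields an
  \<open>\<epsilon>\<close>-subgradient whose slope in direction \<open>u\<close> is almost \<open>N\<close>.\<close>
lemma eps_subgradient_exceeding_slope:
  fixes \<tau> :: "'a::real_vector topology"
  assumes lcs: "lcs \<tau>" and g: "g \<in> Gamma0 \<tau>" "g x = ereal gx" and \<epsilon>: "0 < \<epsilon>"
    and above: "\<And>s. 0 < s \<Longrightarrow> s \<le> 1 \<Longrightarrow> ereal (gx - \<epsilon> / 2 + s * N) < g (x + s *\<^sub>R u)"
  obtains \<phi> where "\<phi> \<in> eps_subdiff \<tau> \<epsilon> g x" "N - \<epsilon> / 2 < \<phi> u"
proof -
  have lc: "locally_convex (prod_topology \<tau> euclideanreal)"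
    using lcs_imp_locally_convex[OF lcs] by (rule locally_convex_prod_real)
  have top: "topspace \<tau> = UNIV"
    using lcs unfolding lcs_def by blast
  define K where "K = (\<lambda>s. (x, gx - \<epsilon> / 2) + s *\<^sub>R (u, N)) ` {0..1}"
  have apart: "\<exists>V. openin (prod_topology \<tau> euclideanreal) V \<and> k \<in> V \<and> V \<inter> ereal_epigraph g = {}"
    if "k \<in> K" for k
  proof -
    obtain s where s: "s \<in> {0..1}" "k = (x + s *\<^sub>R u, gx - \<epsilon> / 2 + s * N)"
      using \<open>k \<in> K\<close> unfolding K_def by auto
    have "ereal (gx - \<epsilon> / 2 + s * N) < g (x + s *\<^sub>R u)"
      using above[of s] s(1) g(2) \<epsilon> by (cases "s = 0") auto
    then obtain V where "openin (prod_topology \<tau> euclideanreal) V"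
      "(x + s *\<^sub>R u, gx - \<epsilon> / 2 + s * N) \<in> V" "V \<inter> ereal_epigraph g = {}"
      using Gamma0_epigraph_apart[OF top g(1)] by blast
    then show ?thesis
      using s(2) by blast
  qed
  have "K \<noteq> {}"
    unfolding K_def by simp
  then obtain L c where L: "linear L" "continuous_map (prod_topology \<tau> euclideanreal) euclideanreal L"
    "\<And>k. k \<in> K \<Longrightarrow> c < L k" "\<And>p. p \<in> ereal_epigraph g \<Longrightarrow> L p < c"
    using separation_compact_convex[OF lc _ _ _ convex_ereal_epigraph[OF g(1)] apart]
      locally_convex_segment[OF lc] unfolding K_def by metis
  obtain w \<beta> where w: "w \<in> dual \<tau>" "\<And>v r. L (v, r) = w v + r * \<beta>"
    using continuous_linear_prod_real[OF L(1,2)] by blast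
  have "(x, gx - \<epsilon> / 2) \<in> K" "(x + u, gx - \<epsilon> / 2 + N) \<in> K"
    unfolding K_def by (auto intro: image_eqI[of _ _ 0] image_eqI[of _ _ 1])
  note ends = L(3)[OF this(1)] L(3)[OF this(2)]
  have start: "c < w x + (gx - \<epsilon> / 2) * \<beta>"
    using ends(1) w(2) by simp
  have epi: "w v + r * \<beta> < c" if "g v \<le> ereal r" for v r
    using L(4)[of "(v, r)"] w(2) that unfolding ereal_epigraph_def by simp
  note sub = eps_subgradient_from_separation[OF g \<epsilon> w(1) start epi]
  have "w x + gx * \<beta> < c"
    using epi g(2) by simp
  with ends(2) w have "(N - \<epsilon> / 2) * - \<beta> < w u"
    unfolding dual_def by (auto simp: linear_add algebra_simps)
  then have "N - \<epsilon> / 2 < w u / - \<beta>"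
    using sub(1) by (intro pos_less_divide_eq[THEN iffD2]) simp_all
  then show ?thesis
    using that sub(2) by blast
qed

lemma eps_subdiff_nonempty:
  assumes "lcs \<tau>" "g \<in> Gamma0 \<tau>" "g x = ereal gx" "0 < \<epsilon>"
  obtains \<phi> where "\<phi> \<in> eps_subdiff \<tau> \<epsilon> g x"
  using eps_subgradient_exceeding_slope[OF assms, of 0 0] assms(3,4) by auto

section \<open>Weak*-closed convex hulls and recession cones\<close>

lemma wstar_topspace: "topspace (wstar \<tau>) = dual \<tau>"
  unfolding wstar_def by simp

lemma convex_fun_dual: "convex_fun (dual \<tau>)"
  unfolding convex_fun_def using dual_comb by blast

lemma wclco_subset_dual: "S \<subseteq> dual \<tau> \<Longrightarrow> wclco \<tau> S \<subseteq> dual \<tau>"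
  unfolding wclco_def using convex_fun_dual closedin_topspace[of "wstar \<tau>"]
  by (auto simp: wstar_topspace)

lemma subset_wclco: "S \<subseteq> wclco \<tau> S"
  unfolding wclco_def by blast

lemma wclco_minimal: "S \<subseteq> C \<Longrightarrow> convex_fun C \<Longrightarrow> closedin (wstar \<tau>) C \<Longrightarrow> wclco \<tau> S \<subseteq> C"
  unfolding wclco_def by blast

lemma closedin_wclco:
  assumes "S \<subseteq> dual \<tau>"
  shows "closedin (wstar \<tau>) (wclco \<tau> S)"
  unfolding wclco_def using assms convex_fun_dual closedin_topspace[of "wstar \<tau>"]
  by (intro closedin_Inter) (auto simp: wstar_topspace)

lemma convex_fun_wclco: "convex_fun (wclco \<tau> S)"
  unfolding wclco_def convex_fun_def by blast

lemma closedin_halfspace: "closedin (wstar \<tau>) {\<phi> \<in> dual \<tau>. \<phi> v \<le> B}"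
proof -
  have "closedin pointwise_topology {\<phi> \<in> topspace pointwise_topology. \<phi> v \<in> {..B}}"
    by (rule closedin_continuous_map_preimage[OF continuous_map_pointwise_eval]) simp
  moreover have "{\<phi> \<in> dual \<tau>. \<phi> v \<le> B} = {\<phi>. \<phi> v \<le> B} \<inter> dual \<tau>"
    by auto
  ultimately show ?thesis
    unfolding wstar_def closedin_subtopology by auto
qed

lemma convex_fun_halfspace: "convex_fun {\<phi> \<in> dual \<tau>. \<phi> v \<le> B}"
  unfolding convex_fun_def
proof (intro ballI allI impI)
  fix \<phi> \<psi> :: "'a \<Rightarrow> real" and u :: real
  assume "\<phi> \<in> {\<phi> \<in> dual \<tau>. \<phi> v \<le> B}" "\<psi> \<in> {\<phi> \<in> dual \<tau>. \<phi> v \<le> B}" "0 \<le> u \<and> u \<le> 1"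
  moreover from this have "u * \<phi> v + (1 - u) * \<psi> v \<le> u * B + (1 - u) * B"
    by (intro add_mono mult_left_mono) auto
  ultimately show "(\<lambda>y. u * \<phi> y + (1 - u) * \<psi> y) \<in> {\<phi> \<in> dual \<tau>. \<phi> v \<le> B}"
    using dual_comb[of \<phi> \<tau> \<psi> u "1 - u"] by (simp add: algebra_simps)
qed

lemma rec_cone_halfspace_nonpos:
  assumes C: "C \<subseteq> {\<phi>. \<phi> v \<le> B}" and y: "y \<in> rec_cone C"
  shows "y v \<le> 0"
proof (rule ccontr)
  assume pos: "\<not> y v \<le> 0"
  obtain z where z: "\<And>r. 0 \<le> r \<Longrightarrow> (\<lambda>w. z w + r * y w) \<in> C"
    using y unfolding rec_cone_def by blast
  define r where "r = max 0 ((B - z v + 1) / y v)"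
  have "z v + r * y v \<le> B"
    using z[of r] C unfolding r_def by auto
  moreover have "(B - z v + 1) / y v * y v \<le> r * y v"
    unfolding r_def using pos by (intro mult_right_mono) auto
  ultimately show False
    using pos by simp
qed

lemma rec_cone_wclco_subset_dual:
  assumes S: "S \<subseteq> dual \<tau>" and y: "y \<in> rec_cone (wclco \<tau> S)"
  shows "y \<in> dual \<tau>"
proof -
  obtain z where z: "z \<in> wclco \<tau> S" "\<forall>r\<ge>0. (\<lambda>v. z v + r * y v) \<in> wclco \<tau> S"
    using y unfolding rec_cone_def by blast
  have "(\<lambda>v. z v + 1 * y v) \<in> wclco \<tau> S"
    using z(2)[rule_format, of 1] by simp
  with z(1) have "(\<lambda>v. 1 * (z v + 1 * y v) + (- 1) * z v) \<in> dual \<tau>"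
    using wclco_subset_dual[OF S] by (intro dual_comb) auto
  then show ?thesis
    by simp
qed

text \<open>If \<open>\<psi>\<close> were outside, weak* separation would give a point where \<open>\<psi>\<close> exceeds the support
  function of \<open>S\<close>.\<close>
lemma wclco_if_below_support:
  assumes S: "S \<subseteq> dual \<tau>" and \<psi>: "\<psi> \<in> dual \<tau>" "\<And>u. ereal (\<psi> u) \<le> (SUP \<phi>\<in>S. ereal (\<phi> u))"
  shows "\<psi> \<in> wclco \<tau> S"
proof (rule ccontr)
  assume "\<psi> \<notin> wclco \<tau> S"
  then obtain u c where uc: "\<And>\<kappa>. \<kappa> \<in> wclco \<tau> S \<Longrightarrow> \<kappa> u < c" "c < \<psi> u"
    using wstar_closed_convex_separation[OF closedin_wclco[OF S] convex_fun_wclco \<psi>(1)] by blast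
  have "(SUP \<phi>\<in>S. ereal (\<phi> u)) \<le> ereal c"
  proof (rule SUP_least)
    fix \<phi>
    assume "\<phi> \<in> S"
    then have "\<phi> u < c"
      using uc(1) subset_wclco by blast
    then show "ereal (\<phi> u) \<le> ereal c"
      by simp
  qed
  then have "ereal (\<psi> u) \<le> ereal c"
    using \<psi>(2)[of u] by (rule order_trans[rotated])
  then show False
    using uc(2) by simp
qed

lemma rec_cone_wclcoI:
  assumes S: "S \<subseteq> dual \<tau>" "\<phi>0 \<in> S" and y: "y \<in> dual \<tau>"
    and nonpos: "\<And>u. (SUP \<phi>\<in>S. ereal (\<phi> u)) \<noteq> \<infinity> \<Longrightarrow> y u \<le> 0"
  shows "y \<in> rec_cone (wclco \<tau> S)"
  unfolding rec_cone_def
proof (intro CollectI bexI[of _ \<phi>0] allI impI)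
  show "\<phi>0 \<in> wclco \<tau> S"
    using S(2) subset_wclco by blast
  fix r :: real
  assume r: "0 \<le> r"
  have "ereal (\<phi>0 u + r * y u) \<le> (SUP \<phi>\<in>S. ereal (\<phi> u))" for u
  proof (cases "(SUP \<phi>\<in>S. ereal (\<phi> u)) = \<infinity>")
    case False
    then have "\<phi>0 u + r * y u \<le> \<phi>0 u"
      using nonpos r by (simp add: mult_nonneg_nonpos)
    also have "ereal (\<phi>0 u) \<le> (SUP \<phi>\<in>S. ereal (\<phi> u))"
      using S(2) by (rule SUP_upper)
    finally show ?thesis
      by simp
  qed simp
  moreover have "(\<lambda>v. 1 * \<phi>0 v + r * y v) \<in> dual \<tau>"
    using S y by (intro dual_comb) auto
  ultimately show "(\<lambda>v. \<phi>0 v + r * y v) \<in> wclco \<tau> S"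
    using wclco_if_below_support[OF S(1), of "\<lambda>v. \<phi>0 v + r * y v"] by simp
qed

lemma eps_subdiff_subset_dual: "eps_subdiff \<tau> \<epsilon> g x \<subseteq> dual \<tau>"
  unfolding eps_subdiff_def by auto

section \<open>The normal cone to the domain of a supremum\<close>

lemma SUP_Gamma0_finite:
  assumes T: "T \<noteq> {}" and F: "\<And>t. t \<in> T \<Longrightarrow> F t \<in> Gamma0 \<tau>"
    and v: "v \<in> edom (\<lambda>z. SUP t\<in>T. F t z)"
  obtains P where "(SUP t\<in>T. F t v) = ereal P"
proof -
  obtain t0 where "t0 \<in> T"
    using T by blast
  then have "F t0 v \<le> (SUP t\<in>T. F t v)" "F t0 v \<noteq> - \<infinity>"
    using F Gamma0_not_minf by (auto intro: SUP_upper)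
  moreover have "(SUP t\<in>T. F t v) < \<infinity>"
    using v unfolding edom_def by simp
  ultimately show ?thesis
    using that by (cases "SUP t\<in>T. F t v") auto
qed

lemma INF_scaled_Gamma0_finite:
  assumes T: "T \<noteq> {}" and F: "\<And>t. t \<in> T \<Longrightarrow> F t \<in> Gamma0 \<tau>"
    and x: "x \<in> edom (\<lambda>z. SUP t\<in>T. F t z)" and e: "\<And>t. t \<in> T \<Longrightarrow> 0 < e t"
    and bounded: "(INF t\<in>T. ereal (e t) * F t x) > - \<infinity>"
  obtains m where "(INF t\<in>T. ereal (e t) * F t x) = ereal m"
proof -
  obtain P where P: "(SUP t\<in>T. F t x) = ereal P"
    using SUP_Gamma0_finite[OF T F x] by blast
  obtain t0 where t0: "t0 \<in> T"
    using T by blast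
  have "(INF t\<in>T. ereal (e t) * F t x) \<le> ereal (e t0) * F t0 x"
    using t0 by (rule INF_lower)
  also have "\<dots> < \<infinity>"
    using F[OF t0] e[OF t0] SUP_upper[OF t0, of "\<lambda>t. F t x"] P
    by (cases "F t0 x") (auto dest: Gamma0_not_minf)
  finally show ?thesis
    using bounded that by (cases "INF t\<in>T. ereal (e t) * F t x") auto
qed

text \<open>Only \<open>c \<le> 1\<close> and a lower bound of \<open>c G x\<close> enter, so the bound is uniform in \<open>t\<close>.\<close>
lemma eps_subdiff_scaled_bound:
  assumes \<phi>: "\<phi> \<in> eps_subdiff \<tau> \<epsilon> (\<lambda>z. ereal c * G z) x" and c: "0 < c" "c \<le> 1"
    and Gv: "G v \<le> ereal P" "G v \<noteq> - \<infinity>" and m: "ereal m \<le> ereal c * G x"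
  shows "\<phi> (v - x) \<le> max 0 P - m + \<epsilon>"
proof -
  have fin: "ereal c * G x \<notin> {- \<infinity>, \<infinity>}"
    and ineq: "ereal c * G x + ereal (\<phi> (v - x)) - ereal \<epsilon> \<le> ereal c * G v"
    using \<phi> unfolding eps_subdiff_def by (auto split: if_splits)
  obtain gx where gx: "G x = ereal gx"
    using fin c by (cases "G x") auto
  obtain q where q: "G v = ereal q"
    using Gv by (cases "G v") auto
  have "c * q \<le> max 0 P"
  proof (cases "0 \<le> q")
    case True
    then have "c * q \<le> q"
      using c by (simp add: mult_left_le_one_le)
    then show ?thesis
      using Gv(1) q by simp
  next
    case False
    then have "c * q < 0"
      using c by (simp add: mult_pos_neg)
    then show ?thesis
      by simp
  qed
  then show ?thesis
    using ineq m gx q by simp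
qed

lemma rec_cone_subset_normal_cone:
  assumes T: "T \<noteq> {}" and F: "\<And>t. t \<in> T \<Longrightarrow> F t \<in> Gamma0 \<tau>"
    and x: "x \<in> edom (\<lambda>z. SUP t\<in>T. F t z)"
    and e: "\<And>t. t \<in> T \<Longrightarrow> 0 < e t \<and> e t \<le> 1"
    and bounded: "(INF t\<in>T. ereal (e t) * F t x) > - \<infinity>"
  shows "rec_cone (wclco \<tau> (\<Union>t\<in>T. eps_subdiff \<tau> \<epsilon> (\<lambda>z. ereal (e t) * F t z) x))
    \<subseteq> normal_cone \<tau> (edom (\<lambda>z. SUP t\<in>T. F t z)) x"
proof
  define S where "S = (\<Union>t\<in>T. eps_subdiff \<tau> \<epsilon> (\<lambda>z. ereal (e t) * F t z) x)"
  have S: "S \<subseteq> dual \<tau>"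
    unfolding S_def using eps_subdiff_subset_dual by blast
  have "0 < e t" if "t \<in> T" for t
    using e[OF that] by blast
  then obtain m where m: "(INF t\<in>T. ereal (e t) * F t x) = ereal m"
    using INF_scaled_Gamma0_finite[OF T F x _ bounded] by blast
  fix y
  assume "y \<in> rec_cone (wclco \<tau> (\<Union>t\<in>T. eps_subdiff \<tau> \<epsilon> (\<lambda>z. ereal (e t) * F t z) x))"
  then have y: "y \<in> rec_cone (wclco \<tau> S)"
    unfolding S_def .
  have "y (v - x) \<le> 0" if v: "v \<in> edom (\<lambda>z. SUP t\<in>T. F t z)" for v
  proof -
    obtain Pv where Pv: "(SUP t\<in>T. F t v) = ereal Pv"
      using SUP_Gamma0_finite[OF T F v] by blast
    have "S \<subseteq> {\<phi> \<in> dual \<tau>. \<phi> (v - x) \<le> max 0 Pv - m + \<epsilon>}"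
    proof
      fix \<phi>
      assume "\<phi> \<in> S"
      then obtain t where t: "t \<in> T" "\<phi> \<in> eps_subdiff \<tau> \<epsilon> (\<lambda>z. ereal (e t) * F t z) x"
        unfolding S_def by blast
      have "ereal m \<le> ereal (e t) * F t x"
        using INF_lower[OF t(1), of "\<lambda>t. ereal (e t) * F t x"] m by simp
      moreover have "F t v \<le> ereal Pv"
        using SUP_upper[OF t(1), of "\<lambda>t. F t v"] Pv by simp
      ultimately have "\<phi> (v - x) \<le> max 0 Pv - m + \<epsilon>"
        using eps_subdiff_scaled_bound[OF t(2)] e[OF t(1)] Gamma0_not_minf[OF F[OF t(1)]] by blast
      then show "\<phi> \<in> {\<phi> \<in> dual \<tau>. \<phi> (v - x) \<le> max 0 Pv - m + \<epsilon>}"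
        using S \<open>\<phi> \<in> S\<close> by blast
    qed
    then have "wclco \<tau> S \<subseteq> {\<phi>. \<phi> (v - x) \<le> max 0 Pv - m + \<epsilon>}"
      using wclco_minimal[OF _ convex_fun_halfspace closedin_halfspace] by blast
    then show ?thesis
      using y by (rule rec_cone_halfspace_nonpos)
  qed
  then show "y \<in> normal_cone \<tau> (edom (\<lambda>z. SUP t\<in>T. F t z)) x"
    unfolding normal_cone_def using rec_cone_wclco_subset_dual[OF S y] by blast
qed
lemma Gamma0_ray_bound:
  assumes g: "g \<in> Gamma0 \<tau>" and s: "0 < s" "s \<le> s'"
    and far: "g (x + s' *\<^sub>R u) \<le> ereal A" and base: "g x \<le> ereal B"
  shows "g (x + s *\<^sub>R u) \<le> ereal (max A B)"
proof -
  define l where "l = s / s'"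
  define M where "M = max A B"
  have l: "0 \<le> l" "l \<le> 1" "l * s' = s"
    unfolding l_def using s by auto
  then have "x + s *\<^sub>R u = l *\<^sub>R (x + s' *\<^sub>R u) + (1 - l) *\<^sub>R x"
    by (simp add: algebra_simps flip: l(3))
  then have "g (x + s *\<^sub>R u) \<le> ereal l * g (x + s' *\<^sub>R u) + ereal (1 - l) * g x"
    using Gamma0_convex[OF g l(1,2)] by simp
  also have "\<dots> \<le> ereal l * ereal M + ereal (1 - l) * ereal M"
    using far base l unfolding M_def by (intro add_mono ereal_mult_left_mono) (auto intro: order_trans)
  also have "\<dots> = ereal M"
    by (simp add: algebra_simps)
  finally show ?thesis
    unfolding M_def .
qed

text \<open>A finite subcover of \<open>T\<close> by the open sets where \<open>f t'\<close> stays bounded at \<open>x + s\<^sub>t u\<close>, plus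
  convexity along the ray, gives one \<open>s\<close> for all \<open>t\<close>.\<close>
lemma SH_ray_in_dom:
  fixes F :: "'b \<Rightarrow> 'a::real_vector \<Rightarrow> ereal"
  assumes sh: "SH TT T F" and T: "T \<noteq> {}" and F: "\<And>t. t \<in> T \<Longrightarrow> F t \<in> Gamma0 \<tau>"
    and fx: "(SUP t\<in>T. F t x) = ereal fx"
    and ray: "\<And>t. t \<in> T \<Longrightarrow> \<exists>s>0. F t (x + s *\<^sub>R u) < \<infinity>"
  obtains s where "0 < s" "x + s *\<^sub>R u \<in> edom (\<lambda>z. SUP t\<in>T. F t z)"
proof -
  have top: "topspace TT = T" and cpt: "compact_space TT"
    and usc: "\<And>z c. openin TT {t \<in> T. F t z < ereal c}"
    using sh unfolding SH_def by auto
  have "\<forall>t\<in>T. \<exists>s. 0 < s \<and> F t (x + s *\<^sub>R u) < \<infinity>"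
    using ray by blast
  then obtain st where "\<forall>t\<in>T. 0 < st t \<and> F t (x + st t *\<^sub>R u) < \<infinity>"
    using bchoice[OF \<open>\<forall>t\<in>T. \<exists>s. 0 < s \<and> F t (x + s *\<^sub>R u) < \<infinity>\<close>] by blast
  then have st: "0 < st t" "F t (x + st t *\<^sub>R u) < \<infinity>" if "t \<in> T" for t
    using that by blast+
  define bound where "bound t = real_of_ereal (F t (x + st t *\<^sub>R u)) + 1" for t
  define nbhd where "nbhd t = {t' \<in> T. F t' (x + st t *\<^sub>R u) < ereal (bound t)}" for t
  have "compactin TT T"
    using cpt top unfolding compact_space_def by simp
  moreover have "openin TT (nbhd t)" for t
    using usc unfolding nbhd_def by blast
  moreover have "t \<in> nbhd t" if "t \<in> T" for t
    using st(2)[OF that] Gamma0_not_minf[OF F[OF that]] that unfolding nbhd_def bound_def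
    by (cases "F t (x + st t *\<^sub>R u)") auto
  ultimately obtain T0 where T0: "T0 \<subseteq> T" "finite T0" "T \<subseteq> \<Union>(nbhd ` T0)"
    by (rule compactin_finite_index_cover) blast+
  then have "T0 \<noteq> {}"
    using T by auto
  define s where "s = Min (st ` T0)"
  define M where "M = max (Max (bound ` T0)) fx"
  have s: "0 < s"
    unfolding s_def using T0 \<open>T0 \<noteq> {}\<close> st(1) by (subst Min_gr_iff) auto
  have "F t (x + s *\<^sub>R u) \<le> ereal M" if t: "t \<in> T" for t
  proof -
    obtain ti where ti: "ti \<in> T0" "t \<in> nbhd ti"
      using T0(3) t by blast
    have "F t (x + st ti *\<^sub>R u) < ereal (bound ti)"
      using ti(2) unfolding nbhd_def by blast
    moreover have "bound ti \<le> Max (bound ` T0)"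
      using T0(2) ti(1) by simp
    ultimately have far: "F t (x + st ti *\<^sub>R u) \<le> ereal (Max (bound ` T0))"
      by (meson less_imp_le ereal_less_eq(3) order_trans)
    have base: "F t x \<le> ereal fx"
      using SUP_upper[OF t, of "\<lambda>t. F t x"] fx by simp
    have "s \<le> st ti"
      unfolding s_def using T0(2) ti(1) by simp
    from Gamma0_ray_bound[OF F[OF t] s this far base] show ?thesis
      unfolding M_def .
  qed
  then have "(SUP t\<in>T. F t (x + s *\<^sub>R u)) < \<infinity>"
    by (intro le_less_trans[OF SUP_least]) auto
  then show ?thesis
    using that[OF s] unfolding edom_def by simp
qed

text \<open>If some \<open>f t\<close> were \<open>+\<infinity>\<close> on the whole open ray from \<open>x\<close> in direction \<open>u\<close>, every chord
  would lie below its graph, so \<open>\<epsilon>\<close>-subgradients with arbitrarily large values at \<open>u\<close> would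
  exist.\<close>
lemma support_finite_imp_ray_meets_dom:
  assumes lcs: "lcs \<tau>" and F: "F \<in> Gamma0 \<tau>" "F x \<noteq> \<infinity>" and e: "0 < e" and \<epsilon>: "0 < \<epsilon>"
    and S: "eps_subdiff \<tau> \<epsilon> (\<lambda>z. ereal e * F z) x \<subseteq> S"
    and finite: "(SUP \<phi>\<in>S. ereal (\<phi> u)) \<noteq> \<infinity>"
  shows "\<exists>s>0. F (x + s *\<^sub>R u) < \<infinity>"
proof (rule ccontr)
  assume "\<not> (\<exists>s>0. F (x + s *\<^sub>R u) < \<infinity>)"
  then have infinite: "ereal e * F (x + s *\<^sub>R u) = \<infinity>" if "0 < s" for s
    using e that by (auto simp: top.not_eq_extremum ereal_mult_infty)
  obtain fx where fx: "F x = ereal fx"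
    using F Gamma0_not_minf by (cases "F x") auto
  obtain M where M: "(SUP \<phi>\<in>S. ereal (\<phi> u)) \<le> ereal M"
    using finite by (cases "SUP \<phi>\<in>S. ereal (\<phi> u)") auto
  obtain \<phi> where \<phi>: "\<phi> \<in> eps_subdiff \<tau> \<epsilon> (\<lambda>z. ereal e * F z) x" "M + \<epsilon> - \<epsilon> / 2 < \<phi> u"
    using eps_subgradient_exceeding_slope[OF lcs Gamma0_scale[OF F(1) e], of x "e * fx" \<epsilon> "M + \<epsilon>" u]
      fx \<epsilon> infinite by auto
  have "ereal (\<phi> u) \<le> ereal M"
    using SUP_upper[of \<phi> S "\<lambda>\<phi>. ereal (\<phi> u)"] S \<phi>(1) M by (blast intro: order_trans)
  then show False
    using \<phi>(2) \<epsilon> by simp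
qed

lemma normal_cone_subset_rec_cone:
  assumes lcs: "lcs \<tau>" and sh: "SH TT T F" and T: "T \<noteq> {}"
    and F: "\<And>t. t \<in> T \<Longrightarrow> F t \<in> Gamma0 \<tau>"
    and x: "x \<in> edom (\<lambda>z. SUP t\<in>T. F t z)"
    and e: "\<And>t. t \<in> T \<Longrightarrow> 0 < e t \<and> e t \<le> 1" and \<epsilon>: "0 < \<epsilon>"
  shows "normal_cone \<tau> (edom (\<lambda>z. SUP t\<in>T. F t z)) x
    \<subseteq> rec_cone (wclco \<tau> (\<Union>t\<in>T. eps_subdiff \<tau> \<epsilon> (\<lambda>z. ereal (e t) * F t z) x))"
proof
  define S where "S = (\<Union>t\<in>T. eps_subdiff \<tau> \<epsilon> (\<lambda>z. ereal (e t) * F t z) x)"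
  have S: "S \<subseteq> dual \<tau>"
    unfolding S_def using eps_subdiff_subset_dual by blast
  obtain fx where fx: "(SUP t\<in>T. F t x) = ereal fx"
    using SUP_Gamma0_finite[OF T F x] by blast
  have Fx: "F t x \<noteq> \<infinity>" if "t \<in> T" for t
    using SUP_upper[OF that, of "\<lambda>t. F t x"] fx by auto
  obtain t0 where t0: "t0 \<in> T"
    using T by blast
  obtain fx0 where "F t0 x = ereal fx0"
    using Fx[OF t0] Gamma0_not_minf[OF F[OF t0]] by (cases "F t0 x") auto
  then have "ereal (e t0) * F t0 x = ereal (e t0 * fx0)"
    by simp
  then obtain \<phi>0 where "\<phi>0 \<in> eps_subdiff \<tau> \<epsilon> (\<lambda>z. ereal (e t0) * F t0 z) x"
    using eps_subdiff_nonempty[OF lcs Gamma0_scale[OF F[OF t0]] _ \<epsilon>] e[OF t0] by blast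
  then have \<phi>0: "\<phi>0 \<in> S"
    unfolding S_def using t0 by blast
  fix y
  assume y: "y \<in> normal_cone \<tau> (edom (\<lambda>z. SUP t\<in>T. F t z)) x"
  have "y u \<le> 0" if finite: "(SUP \<phi>\<in>S. ereal (\<phi> u)) \<noteq> \<infinity>" for u
  proof -
    have "\<exists>s>0. F t (x + s *\<^sub>R u) < \<infinity>" if "t \<in> T" for t
      using support_finite_imp_ray_meets_dom[OF lcs F[OF that] Fx[OF that] _ \<epsilon> _ finite] e[OF that] that
      unfolding S_def by blast
    then obtain s where s: "0 < s" "x + s *\<^sub>R u \<in> edom (\<lambda>z. SUP t\<in>T. F t z)"
      using SH_ray_in_dom[OF sh T F fx] by blast
    then have "y ((x + s *\<^sub>R u) - x) \<le> 0"
      using y unfolding normal_cone_def by blast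
    then have "s * y u \<le> 0"
      using y unfolding normal_cone_def dual_def by (simp add: linear_scale)
    then show ?thesis
      using s(1) by (simp add: mult_le_0_iff)
  qed
  moreover have "y \<in> dual \<tau>"
    using y unfolding normal_cone_def by blast
  ultimately show "y \<in> rec_cone (wclco \<tau> (\<Union>t\<in>T. eps_subdiff \<tau> \<epsilon> (\<lambda>z. ereal (e t) * F t z) x))"
    using rec_cone_wclcoI[OF S \<phi>0] unfolding S_def by blast
qed

theorem theorem1:
  fixes \<tau> :: "'a::real_vector topology" and T :: "'b set"
    and F :: "'b \<Rightarrow> 'a \<Rightarrow> ereal" and e :: "'b \<Rightarrow> real" and x :: 'a
  assumes "lcs \<tau>"
    and "T \<noteq> {}"
    and "\<And>t. t \<in> T \<Longrightarrow> F t \<in> Gamma0 \<tau>"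
    and "x \<in> edom (\<lambda>z. SUP t\<in>T. F t z)"
    and "\<And>t. t \<in> T \<Longrightarrow> 0 < e t \<and> e t \<le> 1"
    and "(INF t\<in>T. ereal (e t) * F t x) > -\<infinity>"
  shows "(\<forall>\<epsilon>>0. rec_cone (wclco \<tau> (\<Union>t\<in>T. eps_subdiff \<tau> \<epsilon> (\<lambda>z. ereal (e t) * F t z) x))
            \<subseteq> normal_cone \<tau> (edom (\<lambda>z. SUP t\<in>T. F t z)) x)
       \<and> (\<forall>TT. SH TT T F \<longrightarrow>
            (\<forall>\<epsilon>>0. normal_cone \<tau> (edom (\<lambda>z. SUP t\<in>T. F t z)) x
               = rec_cone (wclco \<tau> (\<Union>t\<in>T. eps_subdiff \<tau> \<epsilon> (\<lambda>z. ereal (e t) * F t z) x))))"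
proof (intro conjI allI impI)
  fix \<epsilon> :: real
  show "rec_cone (wclco \<tau> (\<Union>t\<in>T. eps_subdiff \<tau> \<epsilon> (\<lambda>z. ereal (e t) * F t z) x))
      \<subseteq> normal_cone \<tau> (edom (\<lambda>z. SUP t\<in>T. F t z)) x"
    by (rule rec_cone_subset_normal_cone[OF assms(2-6)])
next
  fix TT and \<epsilon> :: real
  assume "SH TT T F" "0 < \<epsilon>"
  show "normal_cone \<tau> (edom (\<lambda>z. SUP t\<in>T. F t z)) x
      = rec_cone (wclco \<tau> (\<Union>t\<in>T. eps_subdiff \<tau> \<epsilon> (\<lambda>z. ereal (e t) * F t z) x))"
    by (intro subset_antisym rec_cone_subset_normal_cone[OF assms(2-6)]
        normal_cone_subset_rec_cone[OF assms(1) \<open>SH TT T F\<close> assms(2-5) \<open>0 < \<epsilon>\<close>])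
qed

end
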